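(* Let $G$ be a group with a conjugation-closed generating set $X$ and let $g\in\mathrm{Mon}(X)$. The interval complex $K_g$ of the interval $[1,g]$ is isometric to the space $\mathrm{WFact}(G,g,\mathbf S)$ of weighted circular factorizations of $g$.
   Context: $\mathrm{Mon}(X)$ is the generated submonoid; $\ell(x)$ is the minimal length of a product of elements of $X$ equal to $x$; $x\le y$ if there is $x'\in\mathrm{Mon}(X)$ with $xx'=y$ and $\ell(x)+\ell(x')=\ell(y)$; $[1,g]=\{x:x\le g\}$, of height $n=\ell(g)$. $O_g$ is the order complex of $[1,g]$ with the orthoscheme metric: each maximal simplex (maximal chain $x_0<\cdots<x_n$) is the standard orthoscheme $\{0\le y_1\le\cdots\le y_n\le1\}\subset\mathbb R^n$ with $x_i$ at the vertex whose last $i$ coordinates are $1$. $K_g$ is the quotient metric space of $O_g$ obtained by identifying, via the order-preserving affine isometry, the simplices of chains $x_0<\cdots<x_k$ and $y_0<\cdots<y_k$ whenever $x_{i-1}^{-1}x_i=y_{i-1}^{-1}y_i$ for all $1\le i\le k$. A linear factorization of $g$ is $[x_L\ x_1\cdots x_k\ x_R]$ with entries in $\mathrm{Mon}(X)$, $x_1,\dots,x_k\ne1$, lengths summing to $\ell(g)$, product $g$. A weighted linear factorization of $g$ is a function $\mathbf u\colon[0,1]\to G$, trivial at all but finitely many points, such that with $0<s_1<\dots<s_k<1$ the points of $(0,1)$ where $\mathbf u$ is nontrivial, $P(\mathbf u)=[\mathbf u(0)\ \mathbf u(s_1)\cdots\mathbf u(s_k)\ \mathbf u(1)]$ is a linear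 factorization of $g$; write $0^{x_L}s_1^{x_1}\cdots s_k^{x_k}1^{x_R}$. The space $\mathrm{WFact}(G,g,\mathbf I)$ of these is a piecewise-Euclidean complex: via $\mathbf u\mapsto\ell\circ\mathbf u$ each cell $\{\mathbf u:P(\mathbf u)=\mathbf x\}$ is identified with an open face of the orthoscheme $\{0\le y_1\le\cdots\le y_n\le1\}$ in which a multiset of $n$ points of $[0,1]$, listed in nondecreasing order, is a point; the metric is pulled back. $\mathrm{WFact}(G,g,\mathbf S)$ is the quotient of $\mathrm{WFact}(G,g,\mathbf I)$ identifying (isometrically, cell by cell) $0^{x_L}s_1^{x_1}\cdots s_k^{x_k}1^{x_R}$ with $0^{y_L}s_1^{y_1}\cdots s_k^{y_k}1^{y_R}$ whenever $x_i=y_i$ for all $1\le i\le k$; it carries the quotient metric. *)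

theory Defs
  imports "HOL-Algebra.Algebra"
begin

definition wprod :: "('a,'b) monoid_scheme \<Rightarrow> 'a list \<Rightarrow> 'a" where
  "wprod G xs = foldr (\<lambda>x y. x \<otimes>\<^bsub>G\<^esub> y) xs \<one>\<^bsub>G\<^esub>"

definition conj_closed :: "('a,'b) monoid_scheme \<Rightarrow> 'a set \<Rightarrow> bool" where
  "conj_closed G S \<longleftrightarrow>
     (\<forall>x\<in>S. \<forall>h\<in>carrier G. h \<otimes>\<^bsub>G\<^esub> x \<otimes>\<^bsub>G\<^esub> m_inv G h \<in> S)"

definition Mon :: "('a,'b) monoid_scheme \<Rightarrow> 'a set \<Rightarrow> 'a set" where
  "Mon G S = {wprod G xs | xs. set xs \<subseteq> S}"

definition wlen :: "('a,'b) monoid_scheme \<Rightarrow> 'a set \<Rightarrow> 'a \<Rightarrow> nat" where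
  "wlen G S x = (LEAST n. \<exists>xs. set xs \<subseteq> S \<and> length xs = n \<and> wprod G xs = x)"

definition pleq :: "('a,'b) monoid_scheme \<Rightarrow> 'a set \<Rightarrow> 'a \<Rightarrow> 'a \<Rightarrow> bool" where
  "pleq G S x y \<longleftrightarrow> x \<in> Mon G S \<and>
     (\<exists>x'\<in>Mon G S. x \<otimes>\<^bsub>G\<^esub> x' = y \<and> wlen G S x + wlen G S x' = wlen G S y)"

definition interval :: "('a,'b) monoid_scheme \<Rightarrow> 'a set \<Rightarrow> 'a \<Rightarrow> 'a set" where
  "interval G S g = {x. pleq G S x g}"

definition is_chain :: "('a,'b) monoid_scheme \<Rightarrow> 'a set \<Rightarrow> 'a \<Rightarrow> 'a list \<Rightarrow> bool" where
  "is_chain G S g c \<longleftrightarrow> set c \<subseteq> interval G S g \<and>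
     sorted_wrt (\<lambda>a b. pleq G S a b \<and> a \<noteq> b) c"

definition is_maxchain :: "('a,'b) monoid_scheme \<Rightarrow> 'a set \<Rightarrow> 'a \<Rightarrow> 'a list \<Rightarrow> bool" where
  "is_maxchain G S g c \<longleftrightarrow> is_chain G S g c \<and>
     \<not> (\<exists>c'. is_chain G S g c' \<and> set c \<subset> set c')"

definition supp :: "('a \<Rightarrow> real) \<Rightarrow> 'a set" where
  "supp p = {x. p x \<noteq> 0}"

text \<open>Points of O_g: barycentric weight functions supported on a chain of [1,g].\<close>
definition Opts :: "('a,'b) monoid_scheme \<Rightarrow> 'a set \<Rightarrow> 'a \<Rightarrow> ('a \<Rightarrow> real) set" where
  "Opts G S g = {p. (\<forall>x. 0 \<le> p x) \<and> finite (supp p) \<and> supp p \<subseteq> interval G S g \<and>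
      (\<forall>x\<in>supp p. \<forall>y\<in>supp p. pleq G S x y \<or> pleq G S y x) \<and> sum p (supp p) = 1}"

text \<open>Orthoscheme coordinates of a point p in the simplex of the maximal chain
  c = [x_0,...,x_n]: x_i sits at the vertex whose last i coordinates are 1, so
  the j-th coordinate (1 \<le> j \<le> n) is the total weight of x_{n+1-j},...,x_n.\<close>
definition ocoord :: "'a list \<Rightarrow> ('a \<Rightarrow> real) \<Rightarrow> nat \<Rightarrow> real" where
  "ocoord c p j = (\<Sum>i\<in>{length c - j..<length c}. p (c ! i))"

definition odist :: "'a list \<Rightarrow> ('a \<Rightarrow> real) \<Rightarrow> ('a \<Rightarrow> real) \<Rightarrow> real" where
  "odist c p q = sqrt (\<Sum>j\<in>{1..length c - 1}. (ocoord c p j - ocoord c q j)^2)"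

definition ostep :: "('a,'b) monoid_scheme \<Rightarrow> 'a set \<Rightarrow> 'a \<Rightarrow>
    ('a \<Rightarrow> real) \<Rightarrow> ('a \<Rightarrow> real) \<Rightarrow> real \<Rightarrow> bool" where
  "ostep G S g p q r \<longleftrightarrow> (\<exists>c. is_maxchain G S g c \<and> supp p \<subseteq> set c \<and> supp q \<subseteq> set c \<and>
      r = odist c p q)"

text \<open>The gluing of K_g: two points are identified iff their support chains have the
  same sequences of labels x_{i-1}^{-1} x_i and corresponding barycentric weights.\<close>
definition Kequiv :: "('a,'b) monoid_scheme \<Rightarrow> 'a set \<Rightarrow> 'a \<Rightarrow>
    ('a \<Rightarrow> real) \<Rightarrow> ('a \<Rightarrow> real) \<Rightarrow> bool" where
  "Kequiv G S g p q \<longleftrightarrow> (\<exists>a b. is_chain G S g a \<and> is_chain G S g b \<and>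
      set a = supp p \<and> set b = supp q \<and> length a = length b \<and>
      (\<forall>i<length a. p (a ! i) = q (b ! i)) \<and>
      (\<forall>i. 0 < i \<and> i < length a \<longrightarrow>
          m_inv G (a ! (i - 1)) \<otimes>\<^bsub>G\<^esub> (a ! i) = m_inv G (b ! (i - 1)) \<otimes>\<^bsub>G\<^esub> (b ! i)))"

text \<open>Given the points P, the in-cell steps (a, b, r): a and b lie in a common closed cell
  at cell distance r, and the gluing relation E, the quotient (pseudo)metric is the infimum
  of total lengths of strings of in-cell steps, consecutive steps being glued by E.\<close>
definition qdist :: "'p set \<Rightarrow> ('p \<Rightarrow> 'p \<Rightarrow> real \<Rightarrow> bool) \<Rightarrow> ('p \<Rightarrow> 'p \<Rightarrow> bool) \<Rightarrow>
    'p \<Rightarrow> 'p \<Rightarrow> real" where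
  "qdist P step E p q = Inf {sum_list (map (\<lambda>(a,b,r). r) s) | s.
      s \<noteq> [] \<and> E p (fst (hd s)) \<and> E (fst (snd (last s))) q \<and>
      (\<forall>(a,b,r)\<in>set s. a \<in> P \<and> b \<in> P \<and> step a b r) \<and>
      (\<forall>i. i + 1 < length s \<longrightarrow> E (fst (snd (s ! i))) (fst (s ! (i + 1))))}"

definition lin_fact :: "('a,'b) monoid_scheme \<Rightarrow> 'a set \<Rightarrow> 'a \<Rightarrow> 'a list \<Rightarrow> bool" where
  "lin_fact G S g fs \<longleftrightarrow> 2 \<le> length fs \<and> set fs \<subseteq> Mon G S \<and>
     (\<forall>i. 0 < i \<and> i + 1 < length fs \<longrightarrow> fs ! i \<noteq> \<one>\<^bsub>G\<^esub>) \<and>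
     sum_list (map (wlen G S) fs) = wlen G S g \<and> wprod G fs = g"

definition wpts :: "('a,'b) monoid_scheme \<Rightarrow> (real \<Rightarrow> 'a) \<Rightarrow> real list" where
  "wpts G u = sorted_list_of_set ({0, 1} \<union> {t. 0 < t \<and> t < 1 \<and> u t \<noteq> \<one>\<^bsub>G\<^esub>})"

definition WFactI :: "('a,'b) monoid_scheme \<Rightarrow> 'a set \<Rightarrow> 'a \<Rightarrow> (real \<Rightarrow> 'a) set" where
  "WFactI G S g = {u. (\<forall>t. t \<notin> {0..1} \<longrightarrow> u t = \<one>\<^bsub>G\<^esub>) \<and>
      finite {t. u t \<noteq> \<one>\<^bsub>G\<^esub>} \<and> lin_fact G S g (map u (wpts G u))}"

text \<open>Orthoscheme coordinates: the multiset with s of multiplicity ell(u(s)), sorted.\<close>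
definition wcoord :: "('a,'b) monoid_scheme \<Rightarrow> 'a set \<Rightarrow> (real \<Rightarrow> 'a) \<Rightarrow> real list" where
  "wcoord G S u = concat (map (\<lambda>t. replicate (wlen G S (u t)) t) (wpts G u))"

definition wdist :: "('a,'b) monoid_scheme \<Rightarrow> 'a set \<Rightarrow> (real \<Rightarrow> 'a) \<Rightarrow> (real \<Rightarrow> 'a) \<Rightarrow> real" where
  "wdist G S u v = sqrt (sum_list (map (\<lambda>(a,b). (a - b)^2) (zip (wcoord G S u) (wcoord G S v))))"

text \<open>Point of the closed cell of the linear factorization fs = [x_L, x_1,..,x_k, x_R]
  with nondecreasing positions t = [0, t_1, .., t_k, 1]: the factors placed at the same
  position are multiplied in order.\<close>
definition realize :: "('a,'b) monoid_scheme \<Rightarrow> 'a list \<Rightarrow> real list \<Rightarrow> real \<Rightarrow> 'a" where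
  "realize G fs t s = wprod G [fs ! i. i \<leftarrow> [0..<length fs], t ! i = s]"

definition cell_pos :: "nat \<Rightarrow> real list \<Rightarrow> bool" where
  "cell_pos k t \<longleftrightarrow> length t = k \<and> sorted t \<and> hd t = 0 \<and> last t = 1"

definition wstep :: "('a,'b) monoid_scheme \<Rightarrow> 'a set \<Rightarrow> 'a \<Rightarrow>
    (real \<Rightarrow> 'a) \<Rightarrow> (real \<Rightarrow> 'a) \<Rightarrow> real \<Rightarrow> bool" where
  "wstep G S g u v r \<longleftrightarrow> (\<exists>fs t t'. lin_fact G S g fs \<and>
      cell_pos (length fs) t \<and> cell_pos (length fs) t' \<and>
      u = realize G fs t \<and> v = realize G fs t') \<and> r = wdist G S u v"

definition Sequiv :: "(real \<Rightarrow> 'a) \<Rightarrow> (real \<Rightarrow> 'a) \<Rightarrow> bool" where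
  "Sequiv u v \<longleftrightarrow> (\<forall>t. 0 < t \<and> t < 1 \<longrightarrow> u t = v t)"

end

theory Submission
  imports Defs
begin

(*
  The isometry sends a point p of O_g, with support the chain 1 <= x_1 < ... < x_m <= g and
  barycentric weights p(x_i), to the weighted factorization that places the label x_(i-1)^-1 x_i
  (with x_0 = 1, x_(m+1) = g) at the total weight of x_1, ..., x_(i-1).  Its interior points and
  values recover the labels and the cumulative weights of p, so the gluing of K_g corresponds
  exactly to that of WFact(G,g,S).

  Conversely, spelling the factors of a linear factorization of g by geodesic words, the prefixes
  of the concatenated word form a maximal chain of [1,g], and every point of the closed cell of
  the factorization is the image of a point of the simplex of that chain.  In the simplex of a
  maximal chain the orthoscheme coordinates of a point are the sorted multiset coordinates of its
  image, read backwards, so in-cell steps correspond, with the same lengths, in both directions.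
  Strings of steps can therefore be transported both ways and the two quotient metrics agree.
*)

lemma strict_sorted_eq_upt:
  assumes "sorted_wrt (<) xs" "length xs = m + 1" "\<forall>x\<in>set xs. x \<le> (m::nat)"
  shows "xs = [0..<m+1]"
proof -
  have "set xs \<subseteq> {0..<m+1}" using assms(3) by auto
  moreover have "card (set xs) = m + 1" using assms(1,2) distinct_card strict_sorted_iff by metis
  ultimately have "set xs = {0..<m+1}"
    by (metis card_atLeastLessThan card_subset_eq diff_zero finite_atLeastLessThan)
  then show ?thesis using strict_sorted_equal[OF sorted_wrt_upt assms(1)] by simp
qed

lemma sorted_wrt_less_split:
  assumes "sorted_wrt (<) D" "r \<in> set D"
  obtains D1 D2 where "D = D1 @ r # D2" "\<forall>x\<in>set D1. x < r" "\<forall>x\<in>set D2. r < x"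
proof -
  obtain D1 D2 where D: "D = D1 @ r # D2" using split_list[OF assms(2)] by blast
  then have "\<forall>x\<in>set D1. x < r" "\<forall>x\<in>set D2. r < x" using assms(1) by (auto simp: sorted_wrt_append)
  then show ?thesis using D that by blast
qed

lemma list_comprehension_filter: "[f ! i. i \<leftarrow> xs, P i] = map (\<lambda>i. f ! i) (filter P xs)"
  by (induction xs) auto

lemma zip_conv_map_nth: "length t = length f \<Longrightarrow> zip f t = map (\<lambda>i. (f ! i, t ! i)) [0..<length f]"
  by (rule nth_equalityI) auto

lemma sum_list_map_single:
  "distinct D \<Longrightarrow> r \<in> set D \<Longrightarrow> sum_list (map (\<lambda>s. if r = s then (c::nat) else 0) D) = c"
  by (induction D) (auto simp: sum_list_eq_0_iff)

lemma sum_list_eq_imp_eq_if_le: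
  assumes "distinct D" "sum_list (map a D) = sum_list (map b D)" "\<forall>s\<in>set D. a s \<le> (b s::nat)"
  shows "\<forall>s\<in>set D. a s = b s"
proof -
  have "sum a (set D) = sum b (set D)" using assms(1,2) by (simp add: sum_list_distinct_conv_sum_set)
  then have "sum (\<lambda>s. b s - a s) (set D) = 0" using assms(3) by (simp add: sum_subtractf_nat)
  then have "\<forall>s\<in>set D. b s - a s = 0" by simp
  then show ?thesis using assms(3) by (metis diff_is_0_eq le_antisym)
qed

lemma cell_pos_range:
  assumes "cell_pos k t" "x \<in> set t"
  shows "0 \<le> x" "x \<le> 1"
proof -
  have t: "sorted t" "hd t = 0" "last t = 1" "t \<noteq> []" using assms unfolding cell_pos_def by auto
  obtain i where i: "i < length t" "t ! i = x" using assms(2) by (auto simp: in_set_conv_nth)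
  show "0 \<le> x" using sorted_nth_mono[OF t(1), of 0 i] i t(2) hd_conv_nth[OF t(4)] by simp
  show "x \<le> 1" using sorted_nth_mono[OF t(1), of i "length t - 1"] i t(3) last_conv_nth[OF t(4)] by simp
qed

lemma sorted_list_of_set_hd_last:
  assumes "finite A" "(0::real) \<in> A" "1 \<in> A" "\<forall>x\<in>A. 0 \<le> x \<and> x \<le> 1"
  shows "sorted_list_of_set A \<noteq> [] \<and> hd (sorted_list_of_set A) = 0 \<and> last (sorted_list_of_set A) = 1"
proof -
  let ?l = "sorted_list_of_set A"
  have l: "sorted ?l" "set ?l = A" using assms(1) by auto
  then have ne: "?l \<noteq> []" using assms(2) by auto
  obtain i j where ij: "i < length ?l" "?l ! i = 0" "j < length ?l" "?l ! j = 1"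
    using assms(2,3) l(2) by (metis in_set_conv_nth)
  have "hd ?l \<le> 0" using sorted_nth_mono[OF l(1), of 0 i] ij hd_conv_nth[OF ne] by simp
  moreover have "1 \<le> last ?l"
    using sorted_nth_mono[OF l(1), of j "length ?l - 1"] ij last_conv_nth[OF ne] by simp
  moreover have "hd ?l \<in> A" "last ?l \<in> A" using hd_in_set[OF ne] last_in_set[OF ne] l(2) by auto
  ultimately show ?thesis using ne assms(4) by force
qed

section \<open>Quotient pseudometrics\<close>

definition qstring :: "'p set \<Rightarrow> ('p \<Rightarrow> 'p \<Rightarrow> real \<Rightarrow> bool) \<Rightarrow> ('p \<Rightarrow> 'p \<Rightarrow> bool) \<Rightarrow>
    'p \<Rightarrow> 'p \<Rightarrow> ('p \<times> 'p \<times> real) list \<Rightarrow> bool" where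
  "qstring P step E p q s \<longleftrightarrow> s \<noteq> [] \<and> E p (fst (hd s)) \<and> E (fst (snd (last s))) q \<and>
      (\<forall>(a, b, r)\<in>set s. a \<in> P \<and> b \<in> P \<and> step a b r) \<and>
      (\<forall>i. i + 1 < length s \<longrightarrow> E (fst (snd (s ! i))) (fst (s ! (i + 1))))"

lemma qdist_eq_Inf_qstring:
  "qdist P step E p q = Inf {sum_list (map (\<lambda>(a, b, r). r) s) | s. qstring P step E p q s}"
  unfolding qdist_def qstring_def ..

lemma qstring_map:
  assumes s: "qstring P st E p q s" and p: "p \<in> P" and q: "q \<in> P" and maps_to: "f ` P \<subseteq> P'"
    and glue: "\<And>a b. a \<in> P \<Longrightarrow> b \<in> P \<Longrightarrow> E' (f a) (f b) \<longleftrightarrow> E a b"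
    and step: "\<And>a b r. a \<in> P \<Longrightarrow> b \<in> P \<Longrightarrow> st a b r \<Longrightarrow> st' (f a) (f b) r"
  shows "qstring P' st' E' (f p) (f q) (map (\<lambda>(a, b, r). (f a, f b, r)) s)"
proof -
  have "\<forall>(a, b, r)\<in>set s. a \<in> P \<and> b \<in> P \<and> st a b r" using s unfolding qstring_def by blast
  then have in_P: "a \<in> P \<and> b \<in> P \<and> st a b r" if "(a, b, r) \<in> set s" for a b r
    using that by fastforce
  then have cells: "\<forall>(a, b, r)\<in>set (map (\<lambda>(a, b, r). (f a, f b, r)) s). a \<in> P' \<and> b \<in> P' \<and> st' a b r"
    using maps_to step by (auto simp: image_subset_iff)
  have "s \<noteq> []" using s unfolding qstring_def by blast
  obtain a0 b0 r0 where h: "hd s = (a0, b0, r0)" by (cases "hd s")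
  obtain a1 b1 r1 where l: "last s = (a1, b1, r1)" by (cases "last s")
  have "(a0, b0, r0) \<in> set s" "(a1, b1, r1) \<in> set s"
    using h l hd_in_set[OF \<open>s \<noteq> []\<close>] last_in_set[OF \<open>s \<noteq> []\<close>] by simp_all
  then have "a0 \<in> P" "b1 \<in> P" using in_P by blast+
  moreover have "hd (map (\<lambda>(a, b, r). (f a, f b, r)) s) = (f a0, f b0, r0)" "last (map (\<lambda>(a, b, r). (f a, f b, r)) s) = (f a1, f b1, r1)"
    using h l \<open>s \<noteq> []\<close> by (simp_all add: hd_map last_map)
  ultimately have ends: "E' (f p) (fst (hd (map (\<lambda>(a, b, r). (f a, f b, r)) s)))" "E' (fst (snd (last (map (\<lambda>(a, b, r). (f a, f b, r)) s)))) (f q)"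
    using s p q glue h l unfolding qstring_def by simp_all
  have "E' (fst (snd (map (\<lambda>(a, b, r). (f a, f b, r)) s ! i))) (fst (map (\<lambda>(a, b, r). (f a, f b, r)) s ! (i + 1)))" if i: "i + 1 < length s" for i
  proof -
    obtain a b r where si: "s ! i = (a, b, r)" by (cases "s ! i")
    obtain a' b' r' where sj: "s ! (i + 1) = (a', b', r')" by (cases "s ! (i + 1)")
    have "s ! i \<in> set s" "s ! (i + 1) \<in> set s" using i by simp_all
    then have "(a, b, r) \<in> set s" "(a', b', r') \<in> set s" unfolding si sj .
    then have "b \<in> P" "a' \<in> P" using in_P by blast+
    moreover have "E (fst (snd (s ! i))) (fst (s ! (i + 1)))" using s i unfolding qstring_def by blast
    then have "E b a'" using si sj by simp
    ultimately show ?thesis using glue si sj i by simp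
  qed
  then show ?thesis using cells ends \<open>s \<noteq> []\<close> unfolding qstring_def by simp
qed

lemma qstring_lift:
  assumes s': "qstring P' st' E' (f p) (f q) s'" and p: "p \<in> P" and q: "q \<in> P"
    and glue: "\<And>a b. a \<in> P \<Longrightarrow> b \<in> P \<Longrightarrow> E' (f a) (f b) \<longleftrightarrow> E a b"
    and lift: "\<And>u v r. u \<in> P' \<Longrightarrow> v \<in> P' \<Longrightarrow> st' u v r \<Longrightarrow> \<exists>a\<in>P. \<exists>b\<in>P. f a = u \<and> f b = v \<and> st a b r"
  shows "\<exists>s. qstring P st E p q s \<and> sum_list (map (\<lambda>(a, b, r). r) s) = sum_list (map (\<lambda>(a, b, r). r) s')"
proof -
  have "\<forall>z\<in>set s'. \<exists>ab. fst ab \<in> P \<and> snd ab \<in> P \<and> f (fst ab) = fst z \<and> f (snd ab) = fst (snd z) \<and>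
      st (fst ab) (snd ab) (snd (snd z))"
    using s' lift unfolding qstring_def by fastforce
  then obtain h where h: "\<And>z. z \<in> set s' \<Longrightarrow> fst (h z) \<in> P \<and> snd (h z) \<in> P \<and> f (fst (h z)) = fst z \<and>
      f (snd (h z)) = fst (snd z) \<and> st (fst (h z)) (snd (h z)) (snd (snd z))"
    by metis
  define s where "s = map (\<lambda>z. (fst (h z), snd (h z), snd (snd z))) s'"
  have "s' \<noteq> []" using s' unfolding qstring_def by blast
  then have hd_last: "hd s' \<in> set s'" "last s' \<in> set s'" by simp_all
  have glue_h: "E (snd (h z)) (fst (h z'))" if "z \<in> set s'" "z' \<in> set s'" "E' (fst (snd z)) (fst z')" for z z'
    using glue[of "snd (h z)" "fst (h z')"] h[OF that(1)] h[OF that(2)] that(3) by simp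
  have "E' (f p) (fst (hd s'))" "E' (fst (snd (last s'))) (f q)" using s' unfolding qstring_def by blast+
  then have "E p (fst (h (hd s')))" "E (snd (h (last s'))) q"
    using glue[OF p, of "fst (h (hd s'))"] glue[OF _ q, of "snd (h (last s'))"]
      h[OF hd_last(1)] h[OF hd_last(2)] by simp_all
  then have "E p (fst (hd s))" "E (fst (snd (last s))) q"
    using \<open>s' \<noteq> []\<close> unfolding s_def by (simp_all add: hd_map last_map)
  moreover have "\<forall>(a, b, r)\<in>set s. a \<in> P \<and> b \<in> P \<and> st a b r" using h unfolding s_def by auto
  moreover have "E (fst (snd (s ! i))) (fst (s ! (i + 1)))" if i: "i + 1 < length s" for i
  proof -
    have "s' ! i \<in> set s'" "s' ! (i + 1) \<in> set s'" using i unfolding s_def by simp_all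
    moreover have "E' (fst (snd (s' ! i))) (fst (s' ! (i + 1)))"
      using s' i unfolding qstring_def s_def by simp
    ultimately show ?thesis using glue_h i unfolding s_def by simp
  qed
  moreover have "s \<noteq> []" using \<open>s' \<noteq> []\<close> unfolding s_def by simp
  ultimately have "qstring P st E p q s" unfolding qstring_def by blast
  moreover have "sum_list (map (\<lambda>(a, b, r). r) s) = sum_list (map (\<lambda>(a, b, r). r) s')" unfolding s_def by (induction s') auto
  ultimately show ?thesis by blast
qed

lemma qdist_map_eq:
  fixes f :: "'p \<Rightarrow> 'q"
  assumes p: "p \<in> P" and q: "q \<in> P" and maps_to: "f ` P \<subseteq> P'"
    and glue: "\<And>a b. a \<in> P \<Longrightarrow> b \<in> P \<Longrightarrow> E' (f a) (f b) \<longleftrightarrow> E a b"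
    and step: "\<And>a b r. a \<in> P \<Longrightarrow> b \<in> P \<Longrightarrow> st a b r \<Longrightarrow> st' (f a) (f b) r"
    and lift: "\<And>u v r. u \<in> P' \<Longrightarrow> v \<in> P' \<Longrightarrow> st' u v r \<Longrightarrow> \<exists>a\<in>P. \<exists>b\<in>P. f a = u \<and> f b = v \<and> st a b r"
  shows "qdist P' st' E' (f p) (f q) = qdist P st E p q"
proof -
  let ?len = "\<lambda>s. sum_list (map (\<lambda>(a, b, r). r) s)"
  have "qstring P' st' E' (f p) (f q) (map (\<lambda>(a, b, r). (f a, f b, r)) s)" if "qstring P st E p q s" for s
    using qstring_map[where f = f and P' = P' and E' = E' and st' = st', OF that p q maps_to glue step] .
  moreover have "?len (map (\<lambda>(a, b, r). (f a, f b, r)) s) = ?len s" for s by (induction s) auto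
  moreover have "\<exists>s. qstring P st E p q s \<and> ?len s = ?len s'" if "qstring P' st' E' (f p) (f q) s'" for s'
    using qstring_lift[where f = f and P' = P' and E' = E' and st' = st', OF that p q glue lift] .
  ultimately have "{?len s | s. qstring P' st' E' (f p) (f q) s} = {?len s | s. qstring P st E p q s}"
    by (smt (verit, best) Collect_cong)
  then show ?thesis unfolding qdist_eq_Inf_qstring by simp
qed

section \<open>Word length and the prefix order\<close>

lemma wprod_Nil [simp]: "wprod G [] = \<one>\<^bsub>G\<^esub>"
  by (simp add: wprod_def)

lemma wprod_Cons [simp]: "wprod G (x # xs) = x \<otimes>\<^bsub>G\<^esub> wprod G xs"
  by (simp add: wprod_def)

context monoid
begin

lemma wprod_closed [intro, simp]: "set xs \<subseteq> carrier G \<Longrightarrow> wprod G xs \<in> carrier G"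
  by (induction xs) auto

lemma wprod_append:
  "set xs \<subseteq> carrier G \<Longrightarrow> set ys \<subseteq> carrier G \<Longrightarrow> wprod G (xs @ ys) = wprod G xs \<otimes> wprod G ys"
  by (induction xs) (auto simp: m_assoc)

lemma wprod_concat:
  "set (concat xss) \<subseteq> carrier G \<Longrightarrow> wprod G (concat xss) = wprod G (map (wprod G) xss)"
  by (induction xss) (auto simp: wprod_append)

lemma wprod_ones: "\<forall>x\<in>set xs. x = \<one> \<Longrightarrow> wprod G xs = \<one>"
  by (induction xs) auto

lemma wprod_ones_append_Cons:
  "\<forall>x\<in>set xs. x = \<one> \<Longrightarrow> y \<in> carrier G \<Longrightarrow> set ys \<subseteq> carrier G \<Longrightarrow>
    wprod G (xs @ y # ys) = y \<otimes> wprod G ys"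
  by (induction xs) auto

end

locale word_metric = group G for G :: "('a, 'b) monoid_scheme" (structure) +
  fixes S :: "'a set"
  assumes S_carrier: "S \<subseteq> carrier G"
begin

abbreviation "len \<equiv> wlen G S"
abbreviation "ple \<equiv> pleq G S"

lemma Mon_carrier [simp]: "x \<in> Mon G S \<Longrightarrow> x \<in> carrier G"
  using S_carrier by (auto simp: Mon_def)

lemma one_Mon [simp]: "\<one> \<in> Mon G S"
  unfolding Mon_def by (rule CollectI, rule exI[of _ "[]"]) simp

lemma S_Mon: "s \<in> S \<Longrightarrow> s \<in> Mon G S"
  unfolding Mon_def using S_carrier by (auto intro!: exI[of _ "[s]"])

lemma wprod_Mon: "set xs \<subseteq> S \<Longrightarrow> wprod G xs \<in> Mon G S"
  unfolding Mon_def by auto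

lemma Mon_mult [intro, simp]: "x \<in> Mon G S \<Longrightarrow> y \<in> Mon G S \<Longrightarrow> x \<otimes> y \<in> Mon G S"
proof -
  assume "x \<in> Mon G S" "y \<in> Mon G S"
  then obtain xs ys where "set xs \<subseteq> S" "set ys \<subseteq> S" "x = wprod G xs" "y = wprod G ys"
    by (auto simp: Mon_def)
  then show ?thesis using S_carrier
    by (auto simp: Mon_def wprod_append intro!: exI[of _ "xs @ ys"])
qed

lemma wprod_in_Mon: "set xs \<subseteq> Mon G S \<Longrightarrow> wprod G xs \<in> Mon G S"
  by (induction xs) auto

lemma geodesic_word_exists:
  "x \<in> Mon G S \<Longrightarrow> \<exists>xs. set xs \<subseteq> S \<and> length xs = len x \<and> wprod G xs = x"
proof -
  assume "x \<in> Mon G S"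
  then obtain xs where "set xs \<subseteq> S" "wprod G xs = x" by (auto simp: Mon_def)
  then have "\<exists>n xs. set xs \<subseteq> S \<and> length xs = n \<and> wprod G xs = x" by blast
  from LeastI_ex[OF this] show ?thesis unfolding wlen_def by blast
qed

lemma wlen_wprod_le_length: "set xs \<subseteq> S \<Longrightarrow> len (wprod G xs) \<le> length xs"
  unfolding wlen_def by (rule Least_le) blast

lemma wlen_mult_le: "x \<in> Mon G S \<Longrightarrow> y \<in> Mon G S \<Longrightarrow> len (x \<otimes> y) \<le> len x + len y"
proof -
  assume "x \<in> Mon G S" "y \<in> Mon G S"
  then obtain xs ys where w: "set xs \<subseteq> S" "set ys \<subseteq> S" "x = wprod G xs" "y = wprod G ys"
      "length xs = len x" "length ys = len y"
    using geodesic_word_exists by metis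
  then have "x \<otimes> y = wprod G (xs @ ys)" using S_carrier by (simp add: wprod_append)
  then show ?thesis using wlen_wprod_le_length[of "xs @ ys"] w by simp
qed

lemma wlen_one [simp]: "len \<one> = 0"
  using wlen_wprod_le_length[of "[]"] by simp

lemma wlen_eq_0_imp_one: "x \<in> Mon G S \<Longrightarrow> len x = 0 \<Longrightarrow> x = \<one>"
  using geodesic_word_exists[of x] by auto

lemma wlen_eq_1_imp_S: "x \<in> Mon G S \<Longrightarrow> len x = 1 \<Longrightarrow> x \<in> S"
proof -
  assume "x \<in> Mon G S" "len x = 1"
  then obtain xs where "set xs \<subseteq> S" "length xs = 1" "wprod G xs = x"
    using geodesic_word_exists by metis
  then show ?thesis using S_carrier by (cases xs) auto
qed

lemma wlen_wprod_le_sum: "set xs \<subseteq> Mon G S \<Longrightarrow> len (wprod G xs) \<le> sum_list (map len xs)"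
proof (induction xs)
  case (Cons x xs)
  then show ?case using wlen_mult_le[of x "wprod G xs"] wprod_in_Mon[of xs] by simp
qed simp

lemma geodesic_take_drop:
  assumes "set w \<subseteq> S" "len (wprod G w) = length w" "i \<le> length w"
  shows "len (wprod G (take i w)) = i" "len (wprod G (drop i w)) = length w - i"
proof -
  have w: "set (take i w) \<subseteq> S" "set (drop i w) \<subseteq> S"
    using assms(1) set_take_subset[of i w] set_drop_subset[of i w] by auto
  then have "wprod G w = wprod G (take i w) \<otimes> wprod G (drop i w)"
    using S_carrier wprod_append[of "take i w" "drop i w"] by (metis append_take_drop_id subset_trans)
  then have "length w \<le> len (wprod G (take i w)) + len (wprod G (drop i w))"
    using assms(2) wlen_mult_le[OF wprod_Mon[OF w(1)] wprod_Mon[OF w(2)]] by metis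
  moreover have "len (wprod G (take i w)) \<le> i" "len (wprod G (drop i w)) \<le> length w - i"
    using wlen_wprod_le_length[OF w(1)] wlen_wprod_le_length[OF w(2)] assms(3) by simp_all
  ultimately show "len (wprod G (take i w)) = i" "len (wprod G (drop i w)) = length w - i"
    using assms(3) by linarith+
qed

lemma pleqD:
  assumes "ple x y"
  shows "x \<in> Mon G S" "y \<in> Mon G S" "inv x \<otimes> y \<in> Mon G S" "len x + len (inv x \<otimes> y) = len y"
proof -
  from assms obtain x' where x: "x \<in> Mon G S" "x' \<in> Mon G S" "x \<otimes> x' = y" "len x + len x' = len y"
    unfolding pleq_def by auto
  then have "inv x \<otimes> y = x'" by (auto simp: m_assoc[symmetric])
  then show "x \<in> Mon G S" "y \<in> Mon G S" "inv x \<otimes> y \<in> Mon G S" "len x + len (inv x \<otimes> y) = len y"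
    using x Mon_mult[OF x(1,2)] by auto
qed

lemma pleqI:
  assumes "x \<in> Mon G S" "y \<in> carrier G" "inv x \<otimes> y \<in> Mon G S" "len x + len (inv x \<otimes> y) = len y"
  shows "ple x y"
proof -
  have "x \<otimes> (inv x \<otimes> y) = y" using assms(1,2) by (simp add: m_assoc[symmetric])
  then show ?thesis unfolding pleq_def using assms by blast
qed

lemma pleq_refl: "x \<in> Mon G S \<Longrightarrow> ple x x"
  by (rule pleqI) auto

lemma one_pleq: "x \<in> Mon G S \<Longrightarrow> ple \<one> x"
  by (rule pleqI) auto

lemma pleq_mult: "x \<in> Mon G S \<Longrightarrow> y \<in> Mon G S \<Longrightarrow> len (x \<otimes> y) = len x + len y \<Longrightarrow> ple x (x \<otimes> y)"
  by (rule pleqI) (auto simp: m_assoc[symmetric])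

lemma pleq_wlen_le: "ple x y \<Longrightarrow> len x \<le> len y"
  using pleqD(4)[of x y] by simp

lemma pleq_wlen_eq: "ple x y \<Longrightarrow> len x = len y \<Longrightarrow> x = y"
proof -
  assume a: "ple x y" "len x = len y"
  note d = pleqD[OF a(1)]
  then have "inv x \<otimes> y = \<one>" using a(2) wlen_eq_0_imp_one by simp
  moreover have "x \<otimes> (inv x \<otimes> y) = y" using d(1,2) by (simp add: m_assoc[symmetric])
  ultimately show "x = y" using d(1) by simp
qed

lemma pleq_wlen_less: "ple x y \<Longrightarrow> x \<noteq> y \<Longrightarrow> len x < len y"
  using pleq_wlen_le pleq_wlen_eq by fastforce

lemma pleq_trans:
  assumes "ple x y" "ple y z" shows "ple x z"
proof -
  note a = pleqD[OF assms(1)] and b = pleqD[OF assms(2)]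
  have xc: "x \<in> carrier G" "y \<in> carrier G" "z \<in> carrier G" using a b by auto
  have e: "inv x \<otimes> z = (inv x \<otimes> y) \<otimes> (inv y \<otimes> z)"
    using xc by (simp add: m_assoc[symmetric]) (simp add: m_assoc)
  then have m: "inv x \<otimes> z \<in> Mon G S" using a(3) b(3) by simp
  have "len (inv x \<otimes> z) \<le> len (inv x \<otimes> y) + len (inv y \<otimes> z)"
    unfolding e using wlen_mult_le a(3) b(3) by blast
  moreover have "len z \<le> len x + len (inv x \<otimes> z)"
    using wlen_mult_le[OF a(1) m] xc by (simp add: m_assoc[symmetric])
  ultimately have "len x + len (inv x \<otimes> z) = len z" using a(4) b(4) by linarith
  then show ?thesis using pleqI a(1) xc m by blast
qed

text \<open>Geodesics can be cut at every length: this makes the order graded.\<close>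
lemma pleq_between:
  assumes "ple a b" "m \<le> len b - len a"
  shows "\<exists>z. ple a z \<and> ple z b \<and> len z = len a + m"
proof -
  note ab = pleqD[OF assms(1)]
  obtain w where w: "set w \<subseteq> S" "length w = len (inv a \<otimes> b)" "wprod G w = inv a \<otimes> b"
    using geodesic_word_exists[OF ab(3)] by blast
  have ml: "m \<le> length w" using w(2) ab(4) assms(2) by simp
  note lens = geodesic_take_drop[OF w(1) _ ml]
  have ws: "set (take m w) \<subseteq> S" "set (drop m w) \<subseteq> S"
    using w(1) set_take_subset[of m w] set_drop_subset[of m w] by auto
  define u where "u = wprod G (take m w)"
  define v where "v = wprod G (drop m w)"
  have uv: "u \<in> Mon G S" "v \<in> Mon G S" using ws wprod_Mon u_def v_def by auto
  have "u \<otimes> v = inv a \<otimes> b" unfolding u_def v_def using wprod_append ws S_carrier w(3)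
    by (metis append_take_drop_id subset_trans)
  then have b_eq: "b = (a \<otimes> u) \<otimes> v" using ab uv by (simp add: m_assoc inv_solve_left)
  have lu: "len u = m" and lv: "len v = length w - m" using lens w u_def v_def by simp_all
  have "len (a \<otimes> u) \<le> len a + m" using wlen_mult_le[OF ab(1) uv(1)] lu by simp
  moreover have "len b \<le> len (a \<otimes> u) + len v" using b_eq wlen_mult_le[of "a \<otimes> u" v] ab(1) uv by simp
  ultimately have lau: "len (a \<otimes> u) = len a + m" and "len b = len (a \<otimes> u) + len v"
    using lv w(2) ab(4) ml by linarith+
  then have "ple a (a \<otimes> u)" "ple (a \<otimes> u) b"
    using pleq_mult[OF ab(1) uv(1)] lu pleq_mult[of "a \<otimes> u" v] ab(1) uv b_eq by auto
  then show ?thesis using lau by blast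
qed

end

section \<open>Chains of the interval\<close>

locale word_interval = word_metric +
  fixes g :: 'a
  assumes g_Mon: "g \<in> Mon G S"
begin

abbreviation "n \<equiv> len g"
abbreviation "chain \<equiv> is_chain G S g"
abbreviation "slt \<equiv> (\<lambda>a b. ple a b \<and> a \<noteq> b)"

lemma g_carrier [simp]: "g \<in> carrier G"
  using g_Mon by simp

lemma g_in_interval: "g \<in> interval G S g"
  using pleq_refl g_Mon by (simp add: interval_def)

lemma one_in_interval: "\<one> \<in> interval G S g"
  using one_pleq g_Mon by (simp add: interval_def)

lemma interval_Mon: "x \<in> interval G S g \<Longrightarrow> x \<in> Mon G S"
  using pleqD(1) by (simp add: interval_def)

lemma interval_wlen_le: "x \<in> interval G S g \<Longrightarrow> len x \<le> n"
  using pleq_wlen_le by (simp add: interval_def)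

lemma pleq_by_wlen: "ple x y \<or> ple y x \<Longrightarrow> len x \<le> len y \<Longrightarrow> ple x y"
  using pleq_wlen_le pleq_wlen_eq pleq_refl pleqD(1) by (metis le_antisym)

lemma chain_Mon: "chain c \<Longrightarrow> x \<in> set c \<Longrightarrow> x \<in> Mon G S"
  unfolding is_chain_def using interval_Mon by blast

lemma chain_carrier: "chain c \<Longrightarrow> set c \<subseteq> carrier G"
  using chain_Mon Mon_carrier by blast

lemma chain_wlen_sorted: "chain c \<Longrightarrow> sorted_wrt (<) (map len c)"
  unfolding is_chain_def sorted_wrt_map
  by (auto elim!: sorted_wrt_mono_rel[rotated] intro: pleq_wlen_less)

lemma chain_distinct: "chain c \<Longrightarrow> distinct c"
  using chain_wlen_sorted strict_sorted_iff distinct_map by blast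

lemma chain_wlen_inj: "chain c \<Longrightarrow> inj_on len (set c)"
  using chain_wlen_sorted strict_sorted_iff distinct_map by blast

lemma chain_comparable:
  assumes "chain c" "x \<in> set c" "y \<in> set c"
  shows "ple x y \<or> ple y x"
proof -
  obtain i j where ij: "i < length c" "j < length c" "c ! i = x" "c ! j = y"
    using assms(2,3) by (metis in_set_conv_nth)
  have sw: "sorted_wrt slt c" using assms(1) unfolding is_chain_def by blast
  consider "i < j" | "i = j" | "j < i" by linarith
  then show ?thesis
  proof cases
    case 1 then show ?thesis using sorted_wrt_nth_less[OF sw 1 ij(2)] ij by blast
  next
    case 2 then show ?thesis using ij pleq_refl chain_Mon[OF assms(1,2)] by blast
  next
    case 3 then show ?thesis using sorted_wrt_nth_less[OF sw 3 ij(1)] ij by blast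
  qed
qed

lemma chain_pleq_sorted: "chain c \<Longrightarrow> sorted_wrt ple (\<one> # c @ [g])"
  unfolding is_chain_def using interval_Mon one_pleq g_Mon
  by (auto simp: sorted_wrt_append interval_def elim: sorted_wrt_mono_rel[rotated])

lemma chain_length_le: "chain c \<Longrightarrow> length c \<le> n + 1"
proof -
  assume c: "chain c"
  have "length c = card (len ` set c)"
    using card_image[OF chain_wlen_inj[OF c]] distinct_card[OF chain_distinct[OF c]] by simp
  also have "\<dots> \<le> card {0..n}"
    using c interval_wlen_le unfolding is_chain_def by (intro card_mono) auto
  finally show ?thesis by simp
qed

lemma full_chain_wlen:
  assumes "chain c" "length c = n + 1"
  shows "map len c = [0..<n+1]"
  using strict_sorted_eq_upt[OF chain_wlen_sorted[OF assms(1)]] assms interval_wlen_le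
  unfolding is_chain_def by auto

lemma full_chain_wlen_nth:
  assumes "chain c" "length c = n + 1" "i \<le> n"
  shows "len (c ! i) = i"
  using arg_cong[OF full_chain_wlen[OF assms(1,2)], of "\<lambda>xs. xs ! i"] assms(2,3)
  by (simp del: upt_Suc)

lemma full_chain_is_maxchain:
  assumes "chain c" "length c = n + 1"
  shows "is_maxchain G S g c"
proof -
  have "\<not> (chain c' \<and> set c \<subset> set c')" for c'
  proof
    assume a: "chain c' \<and> set c \<subset> set c'"
    have "card (set c) < card (set c')" using a by (intro psubset_card_mono) auto
    also have "\<dots> \<le> n + 1"
      using chain_length_le a distinct_card[OF chain_distinct] by (metis (no_types))
    finally show False using distinct_card[OF chain_distinct[OF assms(1)]] assms(2) by simp
  qed
  then show ?thesis using assms unfolding is_maxchain_def by blast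
qed

lemma chain_eq_if_set_eq:
  assumes "chain a" "chain b" "set a = set b"
  shows "a = b"
proof -
  have "map len a = map len b"
    using strict_sorted_equal[OF chain_wlen_sorted[OF assms(1)] chain_wlen_sorted[OF assms(2)]] assms(3)
    by simp
  then show ?thesis using chain_wlen_inj[OF assms(1)] assms(3) by (intro map_inj_on[of len]) auto
qed

lemma chain_of_comparable_set:
  assumes "finite A" "A \<subseteq> interval G S g" "\<forall>x\<in>A. \<forall>y\<in>A. ple x y \<or> ple y x"
  shows "\<exists>c. chain c \<and> set c = A"
proof -
  have inj: "inj_on len A"
    by (rule inj_onI) (use assms(3) pleq_wlen_eq in metis)
  define h where "h = the_inv_into A len"
  define c where "c = map h (sorted_list_of_set (len ` A))"
  have hA: "\<And>k. k \<in> len ` A \<Longrightarrow> h k \<in> A \<and> len (h k) = k"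
    unfolding h_def using the_inv_into_f_f[OF inj] by auto
  have "set c = h ` len ` A" unfolding c_def using assms(1) by simp
  also have "\<dots> = A" using the_inv_into_f_f[OF inj] unfolding h_def by (auto simp: image_iff)
  finally have sc: "set c = A" .
  have "sorted_wrt slt c"
    unfolding c_def sorted_wrt_map
  proof (rule sorted_wrt_mono_rel[OF _ sorted_list_of_set.strict_sorted_key_list_of_set])
    fix k l assume kl: "k \<in> set (sorted_list_of_set (len ` A))" "l \<in> set (sorted_list_of_set (len ` A))" "k < l"
    then have "h k \<in> A \<and> len (h k) = k" "h l \<in> A \<and> len (h l) = l" using assms(1) hA by auto
    then show "slt (h k) (h l)" using pleq_by_wlen assms(3) kl(3) by (metis less_imp_le less_irrefl)
  qed
  then show ?thesis using sc assms(2) unfolding is_chain_def by blast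
qed

lemma comparable_set_level_bounds:
  assumes B: "finite B" "\<one> \<in> B" "g \<in> B" "\<forall>x\<in>B. \<forall>y\<in>B. ple x y \<or> ple y x" and k: "k \<le> n"
  obtains a b where "a \<in> B" "b \<in> B" "len a \<le> k" "k \<le> len b"
    "\<forall>y\<in>B. len y \<le> k \<longrightarrow> ple y a" "\<forall>y\<in>B. k \<le> len y \<longrightarrow> ple b y"
proof -
  define Lo where "Lo = {y\<in>B. len y \<le> k}"
  define Up where "Up = {y\<in>B. k \<le> len y}"
  have "\<one> \<in> Lo" "g \<in> Up" using B(2,3) k unfolding Lo_def Up_def by auto
  moreover have "finite Lo" "finite Up" using B(1) unfolding Lo_def Up_def by simp_all
  ultimately have "Max (len ` Lo) \<in> len ` Lo" "Min (len ` Up) \<in> len ` Up"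
    by (intro Max_in Min_in; auto)+
  then obtain a b where "a \<in> Lo" "len a = Max (len ` Lo)" "b \<in> Up" "len b = Min (len ` Up)"
    by (metis imageE)
  with \<open>finite Lo\<close> \<open>finite Up\<close>
  have a: "a \<in> Lo" "\<forall>y\<in>Lo. len y \<le> len a" and b: "b \<in> Up" "\<forall>y\<in>Up. len b \<le> len y"
    by simp_all
  have "ple y a" if "y \<in> B" "len y \<le> k" for y
  proof -
    have "ple y a \<or> ple a y" using B(4) that(1) a(1) unfolding Lo_def by simp
    then show ?thesis by (rule pleq_by_wlen) (use a(2) that in \<open>simp add: Lo_def\<close>)
  qed
  moreover have "ple b y" if "y \<in> B" "k \<le> len y" for y
  proof -
    have "ple b y \<or> ple y b" using B(4) that(1) b(1) unfolding Up_def by simp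
    then show ?thesis by (rule pleq_by_wlen) (use b(2) that in \<open>simp add: Up_def\<close>)
  qed
  ultimately show ?thesis using that a b unfolding Lo_def Up_def by auto
qed

text \<open>A chain missing the level k can be completed there: take the elements of the chain
  (together with 1 and g) directly below and above level k and cut a geodesic between them.\<close>
lemma chain_missing_level:
  assumes c: "chain c" and k: "k \<le> n" "k \<notin> len ` set c"
  shows "\<exists>z\<in>interval G S g. len z = k \<and> (\<forall>y\<in>set c. ple y z \<or> ple z y)"
proof -
  define B where "B = insert \<one> (insert g (set c))"
  have B: "finite B" "B \<subseteq> interval G S g"
    using c one_in_interval g_in_interval unfolding B_def is_chain_def by auto
  have comp: "\<forall>x\<in>B. \<forall>y\<in>B. ple x y \<or> ple y x"
    using chain_comparable[OF c] B(2) interval_Mon one_pleq unfolding B_def interval_def by auto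
  then obtain a b where ab: "a \<in> B" "b \<in> B" "len a \<le> k" "k \<le> len b"
      and below: "\<forall>y\<in>B. len y \<le> k \<longrightarrow> ple y a" and above: "\<forall>y\<in>B. k \<le> len y \<longrightarrow> ple b y"
    using comparable_set_level_bounds[OF B(1) _ _ _ k(1)] unfolding B_def by blast
  have "ple a b \<or> ple b a" using comp ab(1,2) by blast
  then have "ple a b" by (rule pleq_by_wlen) (use ab(3,4) in linarith)
  then obtain z where z: "ple a z" "ple z b" "len z = k"
    using pleq_between[of a b "k - len a"] ab by (auto simp: diff_le_mono)
  have "ple y z \<or> ple z y" if "y \<in> set c" for y
    using that k(2) below above pleq_trans z(1,2) unfolding B_def by (metis image_eqI insert_iff nat_le_linear)
  moreover have "z \<in> interval G S g" using pleq_trans[OF z(2)] ab(2) B(2) by (auto simp: interval_def)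
  ultimately show ?thesis using z(3) by blast
qed

lemma chain_extend:
  assumes c: "chain c" and lc: "length c < n + 1"
  shows "\<exists>c'. chain c' \<and> set c \<subset> set c'"
proof -
  have "card (len ` set c) = length c"
    using card_image[OF chain_wlen_inj[OF c]] distinct_card[OF chain_distinct[OF c]] by simp
  then have "\<not> {0..n} \<subseteq> len ` set c"
    using card_mono[of "len ` set c" "{0..n}"] lc by auto
  then obtain k where "k \<le> n" "k \<notin> len ` set c" by (meson atLeastAtMost_iff le0 subsetI)
  then obtain z where z: "z \<in> interval G S g" "len z = k" "\<forall>y\<in>set c. ple y z \<or> ple z y"
    using chain_missing_level[OF c] by blast
  have "\<exists>c'. chain c' \<and> set c' = insert z (set c)"
    using z c chain_comparable[OF c] pleq_refl interval_Mon
    by (intro chain_of_comparable_set) (auto simp: is_chain_def)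
  moreover have "z \<notin> set c" using z(2) \<open>k \<notin> len ` set c\<close> by blast
  ultimately show ?thesis by auto
qed

lemma maxchain_length: "is_maxchain G S g c \<Longrightarrow> length c = n + 1"
  using chain_extend chain_length_le unfolding is_maxchain_def by (meson le_neq_implies_less)

lemma maxchain_is_chain: "is_maxchain G S g c \<Longrightarrow> chain c"
  unfolding is_maxchain_def by blast

lemma maxchain_wlen_nth: "is_maxchain G S g c \<Longrightarrow> i \<le> n \<Longrightarrow> len (c ! i) = i"
  using full_chain_wlen_nth maxchain_is_chain maxchain_length by blast

lemma maxchain_nth_Mon: "is_maxchain G S g c \<Longrightarrow> i \<le> n \<Longrightarrow> c ! i \<in> Mon G S"
  using chain_Mon maxchain_is_chain maxchain_length by (metis le_imp_less_Suc nth_mem Suc_eq_plus1)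

lemma maxchain_nth_0: "is_maxchain G S g c \<Longrightarrow> c ! 0 = \<one>"
  using maxchain_wlen_nth[of c 0] maxchain_nth_Mon[of c 0] wlen_eq_0_imp_one by simp

lemma maxchain_nth_last: "is_maxchain G S g c \<Longrightarrow> c ! n = g"
proof -
  assume mc: "is_maxchain G S g c"
  then have "c ! n \<in> set c" using maxchain_length by simp
  then have "c ! n \<in> interval G S g"
    using maxchain_is_chain[OF mc] unfolding is_chain_def by blast
  then show ?thesis using pleq_wlen_eq maxchain_wlen_nth[OF mc, of n] by (simp add: interval_def)
qed

section \<open>From points of the order complex to weighted factorizations\<close>

definition pos_prod :: "('a \<times> real) list \<Rightarrow> real \<Rightarrow> 'a" where
  "pos_prod L s = wprod G (map fst (filter (\<lambda>q. snd q = s) L))"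

text \<open>The labels of the steps of the chain prev < b_1 < ... < b_k < g, each placed at acc plus
  the weights of the b_i below it.\<close>
fun placed_labels :: "('a \<Rightarrow> real) \<Rightarrow> 'a \<Rightarrow> real \<Rightarrow> 'a list \<Rightarrow> ('a \<times> real) list" where
  "placed_labels x prev acc [] = [(inv prev \<otimes> g, acc)]"
| "placed_labels x prev acc (b # bs) = (inv prev \<otimes> b, acc) # placed_labels x b (acc + x b) bs"

definition supp_chain :: "('a \<Rightarrow> real) \<Rightarrow> 'a list" where
  "supp_chain p = (THE c. chain c \<and> set c = supp p)"

definition wfact_of :: "('a \<Rightarrow> real) \<Rightarrow> real \<Rightarrow> 'a" where
  "wfact_of p = pos_prod (placed_labels p \<one> 0 (supp_chain p))"

definition chain_label :: "'a list \<Rightarrow> nat \<Rightarrow> 'a" where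
  "chain_label c i = inv ((\<one> # c) ! i) \<otimes> (c @ [g]) ! i"

abbreviation "Og \<equiv> Opts G S g"

lemma pos_prod_Nil [simp]: "pos_prod [] s = \<one>"
  by (simp add: pos_prod_def)

lemma pos_prod_Cons: "pos_prod ((a, r) # L) s = (if r = s then a \<otimes> pos_prod L s else pos_prod L s)"
  by (simp add: pos_prod_def)

lemma pos_prod_closed [simp]: "fst ` set L \<subseteq> carrier G \<Longrightarrow> pos_prod L s \<in> carrier G"
  unfolding pos_prod_def by (rule wprod_closed) auto

lemma pos_prod_append:
  "fst ` set L \<subseteq> carrier G \<Longrightarrow> fst ` set M \<subseteq> carrier G \<Longrightarrow>
    pos_prod (L @ M) s = pos_prod L s \<otimes> pos_prod M s"
  unfolding pos_prod_def by (simp, rule wprod_append) auto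

lemma pos_prod_notin: "s \<notin> snd ` set L \<Longrightarrow> pos_prod L s = \<one>"
  unfolding pos_prod_def by (metis (mono_tags) filter_False image_eqI list.map(1) wprod_Nil)

lemma pos_prod_distinct:
  "distinct (map snd L) \<Longrightarrow> (a, s) \<in> set L \<Longrightarrow> fst ` set L \<subseteq> carrier G \<Longrightarrow> pos_prod L s = a"
proof (induction L)
  case (Cons q L)
  obtain b r where q: "q = (b, r)" by force
  show ?case
  proof (cases "r = s")
    case True
    then have "a = b" "pos_prod L s = \<one>"
      using Cons.prems q by (auto simp: image_iff intro!: pos_prod_notin)
    then show ?thesis using q True Cons.prems by (simp add: pos_prod_Cons)
  next
    case False
    then show ?thesis using q Cons by (auto simp: pos_prod_Cons)
  qed
qed simp

lemma placed_labels_carrier: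
  "prev \<in> carrier G \<Longrightarrow> set bs \<subseteq> carrier G \<Longrightarrow> fst ` set (placed_labels x prev acc bs) \<subseteq> carrier G"
  by (induction bs arbitrary: prev acc) auto

lemma length_placed_labels [simp]: "length (placed_labels x prev acc bs) = length bs + 1"
  by (induction bs arbitrary: prev acc) auto

lemma placed_labels_nth:
  "i \<le> length bs \<Longrightarrow> placed_labels x prev acc bs ! i =
     (inv ((prev # bs) ! i) \<otimes> (bs @ [g]) ! i, acc + sum_list (map x (take i bs)))"
proof (induction bs arbitrary: prev acc i)
  case (Cons b bs)
  then show ?case by (cases i) (simp_all add: add.assoc)
qed simp

lemma wprod_placed_labels:
  "prev \<in> carrier G \<Longrightarrow> set bs \<subseteq> carrier G \<Longrightarrow>
    wprod G (map fst (placed_labels x prev acc bs)) = inv prev \<otimes> g"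
  by (induction bs arbitrary: prev acc) (simp_all add: m_assoc[symmetric], simp add: m_assoc)

lemma sum_wlen_placed_labels:
  "sorted_wrt ple (prev # bs) \<Longrightarrow> \<forall>b\<in>set (prev # bs). ple b g \<Longrightarrow>
    sum_list (map len (map fst (placed_labels x prev acc bs))) = n - len prev"
proof (induction bs arbitrary: prev acc)
  case Nil
  then show ?case using pleqD(4)[of prev g] by simp
next
  case (Cons b bs)
  then have "sum_list (map len (map fst (placed_labels x b (acc + x b) bs))) = n - len b"
    and "len prev + len (inv prev \<otimes> b) = len b" and "len b \<le> n"
    using pleqD(4)[of prev b] pleq_wlen_le by simp_all
  then show ?case by simp
qed

text \<open>A point of weight zero merges the two labels around it, at the same position, into one.\<close>
lemma pos_prod_placed_labels_merge:
  assumes "prev \<in> carrier G" "b \<in> carrier G" "set bs \<subseteq> carrier G"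
  shows "pos_prod ((inv prev \<otimes> b, acc) # placed_labels x b acc bs) = pos_prod (placed_labels x prev acc bs)"
proof
  fix s
  have merge: "(inv prev \<otimes> b) \<otimes> ((inv b \<otimes> c) \<otimes> y) = (inv prev \<otimes> c) \<otimes> y"
    if "c \<in> carrier G" "y \<in> carrier G" for c y
    using assms that by (simp add: m_assoc[symmetric]) (simp add: m_assoc)
  show "pos_prod ((inv prev \<otimes> b, acc) # placed_labels x b acc bs) s = pos_prod (placed_labels x prev acc bs) s"
  proof (cases bs)
    case Nil
    then show ?thesis using merge[of g \<one>] by (simp add: pos_prod_Cons)
  next
    case (Cons c cs)
    then have "c \<in> carrier G" "pos_prod (placed_labels x c (acc + x c) cs) s \<in> carrier G"
      using assms(3) placed_labels_carrier by auto
    then show ?thesis using Cons merge by (cases "acc = s") (simp_all add: pos_prod_Cons)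
  qed
qed

lemma pos_prod_placed_labels_filter:
  assumes "prev \<in> carrier G" "set bs \<subseteq> carrier G"
  shows "pos_prod (placed_labels x prev acc bs) = pos_prod (placed_labels x prev acc (filter (\<lambda>z. x z \<noteq> 0) bs))"
  using assms
proof (induction bs arbitrary: prev acc)
  case (Cons b bs)
  show ?case
  proof (cases "x b = 0")
    case False
    then show ?thesis using Cons by (simp add: fun_eq_iff pos_prod_Cons)
  next
    case True
    then have "pos_prod (placed_labels x prev acc (b # bs)) = pos_prod (placed_labels x prev acc bs)"
      using pos_prod_placed_labels_merge Cons.prems by simp
    then show ?thesis using Cons True by simp
  qed
qed simp

lemma OptsD:
  assumes "p \<in> Og"
  shows "\<And>x. 0 \<le> p x" "finite (supp p)" "supp p \<subseteq> interval G S g"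
    "\<forall>x\<in>supp p. \<forall>y\<in>supp p. ple x y \<or> ple y x" "sum p (supp p) = 1"
  using assms unfolding Opts_def by blast+

lemma supp_chain:
  assumes "p \<in> Og" shows "chain (supp_chain p)" "set (supp_chain p) = supp p"
proof -
  obtain c where c: "chain c" "set c = supp p" using chain_of_comparable_set OptsD[OF assms] by metis
  have "chain (supp_chain p) \<and> set (supp_chain p) = supp p"
    unfolding supp_chain_def by (rule theI[of _ c]) (use c chain_eq_if_set_eq in auto)
  then show "chain (supp_chain p)" "set (supp_chain p) = supp p" by auto
qed

lemma supp_chain_eq: "p \<in> Og \<Longrightarrow> chain c \<Longrightarrow> set c = supp p \<Longrightarrow> supp_chain p = c"
  using chain_eq_if_set_eq supp_chain by metis

lemma supp_chain_nonempty: "p \<in> Og \<Longrightarrow> supp_chain p \<noteq> []"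
proof
  assume p: "p \<in> Og" and "supp_chain p = []"
  then have "supp p = {}" using supp_chain(2)[OF p] by simp
  then show False using OptsD(5)[OF p] by (metis sum.empty zero_neq_one)
qed

lemma supp_chain_pos:
  assumes p: "p \<in> Og" and x: "x \<in> set (supp_chain p)"
  shows "0 < p x"
proof -
  have "p x \<noteq> 0" using x supp_chain(2)[OF p] by (simp add: supp_def)
  then show ?thesis using OptsD(1)[OF p, of x] by simp
qed

lemma sum_supp_chain:
  assumes p: "p \<in> Og"
  shows "sum_list (map p (supp_chain p)) = 1"
proof -
  have "sum_list (map p (supp_chain p)) = sum p (set (supp_chain p))"
    by (rule sum_list_distinct_conv_sum_set[OF chain_distinct[OF supp_chain(1)[OF p]]])
  then show ?thesis using supp_chain(2)[OF p] OptsD(5)[OF p] by simp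
qed

lemma supp_chain_carrier: "p \<in> Og \<Longrightarrow> set (supp_chain p) \<subseteq> carrier G"
  by (rule chain_carrier[OF supp_chain(1)])

lemma wfact_of_chain:
  assumes "p \<in> Og" "chain c" "supp p \<subseteq> set c"
  shows "wfact_of p = pos_prod (placed_labels p \<one> 0 c)"
proof -
  have "chain (filter (\<lambda>z. p z \<noteq> 0) c)"
    using assms(2) sorted_wrt_filter unfolding is_chain_def by fastforce
  moreover have "set (filter (\<lambda>z. p z \<noteq> 0) c) = supp p" using assms(3) unfolding supp_def by auto
  ultimately have "supp_chain p = filter (\<lambda>z. p z \<noteq> 0) c" using supp_chain_eq assms(1) by blast
  then show ?thesis
    unfolding wfact_of_def using pos_prod_placed_labels_filter chain_carrier[OF assms(2)] by simp
qed

lemma chain_label_inner: "0 < i \<Longrightarrow> i < length c \<Longrightarrow> chain_label c i = inv (c ! (i - 1)) \<otimes> c ! i"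
  by (simp add: chain_label_def nth_append_left)

lemma chain_label_Mon: "chain c \<Longrightarrow> i \<le> length c \<Longrightarrow> chain_label c i \<in> Mon G S"
proof -
  assume "chain c" "i \<le> length c"
  then have "ple ((\<one> # c @ [g]) ! i) ((\<one> # c @ [g]) ! Suc i)"
    using sorted_wrt_nth_less[OF chain_pleq_sorted, of c i "Suc i"] by simp
  moreover have "(\<one> # c @ [g]) ! i = (\<one> # c) ! i"
    using \<open>i \<le> length c\<close> by (cases i) (auto simp: nth_append)
  ultimately show ?thesis unfolding chain_label_def using pleqD(3) by simp
qed

lemma chain_label_neq_one:
  assumes "chain c" "0 < i" "i < length c"
  shows "chain_label c i \<noteq> \<one>"
proof -
  have "c ! (i - 1) \<noteq> c ! i"
    using sorted_wrt_nth_less[of slt c "i - 1" i] assms unfolding is_chain_def by simp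
  moreover have "c ! (i - 1) \<in> carrier G" "c ! i \<in> carrier G"
    using chain_carrier[OF assms(1)] assms(2,3) by auto
  ultimately show ?thesis
    using chain_label_inner[OF assms(2,3)] inv_solve_left'[of \<one> "c ! (i - 1)" "c ! i"] by auto
qed

lemma lin_fact_placed_labels:
  assumes "chain c" "c \<noteq> []"
  shows "lin_fact G S g (map fst (placed_labels x \<one> 0 c))"
  unfolding lin_fact_def
proof (intro conjI allI impI)
  have labels: "map fst (placed_labels x \<one> 0 c) = map (chain_label c) [0..<length c + 1]"
    by (rule nth_equalityI) (auto simp: placed_labels_nth chain_label_def simp del: upt_Suc)
  show "2 \<le> length (map fst (placed_labels x \<one> 0 c))" using assms(2) by (cases c) auto
  show "set (map fst (placed_labels x \<one> 0 c)) \<subseteq> Mon G S"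
    unfolding labels using chain_label_Mon[OF assms(1)] by auto
  show "map fst (placed_labels x \<one> 0 c) ! i \<noteq> \<one>"
    if "0 < i \<and> i + 1 < length (map fst (placed_labels x \<one> 0 c))" for i
    using that chain_label_neq_one[OF assms(1)] unfolding labels by (simp del: upt_Suc)
  have "sorted_wrt ple (\<one> # c)" using chain_pleq_sorted[OF assms(1)] by (simp add: sorted_wrt_append)
  moreover have "\<forall>b\<in>set (\<one> # c). ple b g"
    using one_pleq[OF g_Mon] assms(1) unfolding is_chain_def interval_def by auto
  ultimately show "sum_list (map len (map fst (placed_labels x \<one> 0 c))) = n"
    using sum_wlen_placed_labels by simp
  show "wprod G (map fst (placed_labels x \<one> 0 c)) = g"
    using wprod_placed_labels chain_carrier[OF assms(1)] by simp
qed

definition cum_weight :: "('a \<Rightarrow> real) \<Rightarrow> nat \<Rightarrow> real" where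
  "cum_weight p i = sum_list (map p (take i (supp_chain p)))"

lemma cum_weight_0 [simp]: "cum_weight p 0 = 0"
  by (simp add: cum_weight_def)

lemma cum_weight_last: "p \<in> Og \<Longrightarrow> cum_weight p (length (supp_chain p)) = 1"
  using sum_supp_chain by (simp add: cum_weight_def)

lemma cum_weight_Suc:
  "i < length (supp_chain p) \<Longrightarrow> cum_weight p (Suc i) = cum_weight p i + p (supp_chain p ! i)"
  by (simp add: cum_weight_def take_Suc_conv_app_nth)

lemma cum_weight_strict_mono:
  assumes "p \<in> Og" "i < j" "j \<le> length (supp_chain p)"
  shows "cum_weight p i < cum_weight p j"
  using assms(2,3)
proof (induction j)
  case (Suc j)
  have "0 < p (supp_chain p ! j)" using supp_chain_pos[OF assms(1)] Suc.prems by simp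
  then have "cum_weight p j < cum_weight p (Suc j)" using cum_weight_Suc Suc.prems by simp
  then show ?case using Suc by (cases "i = j") auto
qed simp

lemma cum_weight_mono:
  assumes "p \<in> Og" "i \<le> j" "j \<le> length (supp_chain p)"
  shows "cum_weight p i \<le> cum_weight p j"
  using cum_weight_strict_mono[OF assms(1)] assms by (cases "i = j") (auto intro: less_imp_le)

lemma cum_weight_range:
  assumes "p \<in> Og" "i \<le> length (supp_chain p)"
  shows "0 \<le> cum_weight p i" "cum_weight p i \<le> 1"
  using cum_weight_mono[OF assms(1), of 0 i] cum_weight_mono[OF assms(1), of i "length (supp_chain p)"]
    cum_weight_last[OF assms(1)] assms(2)
  by auto

lemma sorted_cum_weight:
  assumes "p \<in> Og" "b \<le> length (supp_chain p) + 1"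
  shows "sorted_wrt (<) (map (cum_weight p) [a..<b])"
  unfolding sorted_wrt_map
proof (rule sorted_wrt_mono_rel[OF _ sorted_wrt_upt])
  fix i j assume "i \<in> set [a..<b]" "j \<in> set [a..<b]" "i < j"
  then show "cum_weight p i < cum_weight p j" using cum_weight_strict_mono[OF assms(1)] assms(2) by simp
qed

abbreviation "labels_of p \<equiv> placed_labels p \<one> 0 (supp_chain p)"

lemma labels_of_nth:
  "i \<le> length (supp_chain p) \<Longrightarrow> labels_of p ! i = (chain_label (supp_chain p) i, cum_weight p i)"
  using placed_labels_nth by (simp add: cum_weight_def chain_label_def)

lemma labels_of_snd: "map snd (labels_of p) = map (cum_weight p) [0..<length (supp_chain p) + 1]"
  by (rule nth_equalityI) (auto simp: labels_of_nth simp del: upt_Suc)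

lemma wfact_of_at:
  assumes "p \<in> Og" "i \<le> length (supp_chain p)"
  shows "wfact_of p (cum_weight p i) = chain_label (supp_chain p) i"
proof -
  have "distinct (map snd (labels_of p))"
    unfolding labels_of_snd using sorted_cum_weight[OF assms(1)] strict_sorted_iff by blast
  moreover have "(chain_label (supp_chain p) i, cum_weight p i) \<in> set (labels_of p)"
    using labels_of_nth[OF assms(2)] nth_mem[of i "labels_of p"] assms(2) by simp
  moreover have "fst ` set (labels_of p) \<subseteq> carrier G"
    using placed_labels_carrier supp_chain_carrier[OF assms(1)] by simp
  ultimately show ?thesis unfolding wfact_of_def by (rule pos_prod_distinct)
qed

lemma wfact_of_notin:
  assumes "s \<notin> cum_weight p ` {0..length (supp_chain p)}"
  shows "wfact_of p s = \<one>"
proof -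
  have "snd ` set (labels_of p) = cum_weight p ` {0..length (supp_chain p)}"
    using arg_cong[OF labels_of_snd, of set] by (simp add: atLeastLessThanSuc_atLeastAtMost del: upt_Suc)
  then show ?thesis unfolding wfact_of_def using pos_prod_notin assms by auto
qed

lemma interior_points_wfact_of:
  assumes p: "p \<in> Og"
  shows "{s. 0 < s \<and> s < 1 \<and> wfact_of p s \<noteq> \<one>} = cum_weight p ` {1..<length (supp_chain p)}"
proof (intro equalityI subsetI)
  fix s assume s: "s \<in> {s. 0 < s \<and> s < 1 \<and> wfact_of p s \<noteq> \<one>}"
  then have "s \<in> cum_weight p ` {0..length (supp_chain p)}" using wfact_of_notin by blast
  then obtain i where i: "i \<le> length (supp_chain p)" "s = cum_weight p i" by auto
  moreover have "i \<noteq> 0" using i s by (metis cum_weight_0 less_irrefl mem_Collect_eq)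
  moreover have "i \<noteq> length (supp_chain p)" using i s cum_weight_last[OF p] by auto
  ultimately show "s \<in> cum_weight p ` {1..<length (supp_chain p)}" by auto
next
  fix s assume "s \<in> cum_weight p ` {1..<length (supp_chain p)}"
  then obtain i where i: "1 \<le> i" "i < length (supp_chain p)" "s = cum_weight p i" by auto
  then have "0 < s" "s < 1"
    using cum_weight_strict_mono[OF p, of 0 i] cum_weight_strict_mono[OF p, of i "length (supp_chain p)"]
      cum_weight_last[OF p]
    by auto
  moreover have "wfact_of p s \<noteq> \<one>"
    using wfact_of_at[OF p, of i] chain_label_neq_one[OF supp_chain(1)[OF p]] i by simp
  ultimately show "s \<in> {s. 0 < s \<and> s < 1 \<and> wfact_of p s \<noteq> \<one>}" by simp
qed

lemma wpts_wfact_of: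
  assumes p: "p \<in> Og"
  shows "wpts G (wfact_of p) = map (cum_weight p) [0..<length (supp_chain p) + 1]"
proof -
  define m where "m = length (supp_chain p)"
  have "{0..m} = insert 0 (insert m {1..<m})" using supp_chain_nonempty[OF p] m_def by auto
  then have "{0, 1} \<union> {t. 0 < t \<and> t < 1 \<and> wfact_of p t \<noteq> \<one>} = cum_weight p ` {0..m}"
    using interior_points_wfact_of[OF p] cum_weight_last[OF p] m_def by auto
  also have "\<dots> = set (map (cum_weight p) [0..<m + 1])"
  proof -
    have "set [0..<m + 1] = {0..m}" by auto
    then show ?thesis by (simp del: upt_Suc)
  qed
  finally show ?thesis
    unfolding wpts_def m_def
    using strict_sorted_equal[OF sorted_cum_weight[OF p] sorted_list_of_set.strict_sorted_key_list_of_set]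
    by (simp del: upt_Suc)
qed

lemma wfact_of_in_WFactI:
  assumes p: "p \<in> Og"
  shows "wfact_of p \<in> WFactI G S g"
proof -
  have outside: "\<forall>t. t \<notin> {0..1} \<longrightarrow> wfact_of p t = \<one>"
  proof (intro allI impI)
    fix t :: real assume t: "t \<notin> {0..1}"
    have "t \<notin> cum_weight p ` {0..length (supp_chain p)}"
    proof
      assume "t \<in> cum_weight p ` {0..length (supp_chain p)}"
      then obtain i where "i \<le> length (supp_chain p)" "t = cum_weight p i" by auto
      then show False using cum_weight_range[OF p, of i] t by simp
    qed
    then show "wfact_of p t = \<one>" by (rule wfact_of_notin)
  qed
  have "{t. wfact_of p t \<noteq> \<one>} \<subseteq> cum_weight p ` {0..length (supp_chain p)}"
  proof
    fix t assume "t \<in> {t. wfact_of p t \<noteq> \<one>}"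
    then show "t \<in> cum_weight p ` {0..length (supp_chain p)}" using wfact_of_notin[of t p] by auto
  qed
  then have fin: "finite {t. wfact_of p t \<noteq> \<one>}" by (rule finite_subset) simp
  have labels: "map (wfact_of p) (wpts G (wfact_of p)) = map fst (labels_of p)"
    unfolding wpts_wfact_of[OF p]
    by (rule nth_equalityI) (auto simp: wfact_of_at[OF p] labels_of_nth simp del: upt_Suc)
  have "lin_fact G S g (map (wfact_of p) (wpts G (wfact_of p)))"
    unfolding labels by (rule lin_fact_placed_labels[OF supp_chain(1)[OF p] supp_chain_nonempty[OF p]])
  then show ?thesis unfolding WFactI_def mem_Collect_eq by (rule conjI[OF outside conjI[OF fin]])
qed

section \<open>The two gluings agree\<close>

lemma Kequiv_iff:
  assumes p: "p \<in> Og" and q: "q \<in> Og"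
  shows "Kequiv G S g p q \<longleftrightarrow>
     length (supp_chain p) = length (supp_chain q) \<and>
     (\<forall>i<length (supp_chain p). p (supp_chain p ! i) = q (supp_chain q ! i)) \<and>
     (\<forall>i. 0 < i \<and> i < length (supp_chain p) \<longrightarrow>
        inv (supp_chain p ! (i - 1)) \<otimes> supp_chain p ! i = inv (supp_chain q ! (i - 1)) \<otimes> supp_chain q ! i)"
    (is "?K \<longleftrightarrow> ?R")
proof
  assume ?K
  then obtain a b where ab: "chain a" "chain b" "set a = supp p" "set b = supp q" "length a = length b"
      "\<forall>i<length a. p (a ! i) = q (b ! i)"
      "\<forall>i. 0 < i \<and> i < length a \<longrightarrow> inv (a ! (i - 1)) \<otimes> a ! i = inv (b ! (i - 1)) \<otimes> b ! i"
    unfolding Kequiv_def by blast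
  moreover have "a = supp_chain p" "b = supp_chain q"
    using supp_chain_eq[OF p ab(1,3)] supp_chain_eq[OF q ab(2,4)] by simp_all
  ultimately show ?R by simp
next
  assume ?R
  then show ?K unfolding Kequiv_def using supp_chain[OF p] supp_chain[OF q] by blast
qed

lemma cum_weight_eq:
  assumes "length (supp_chain p) = length (supp_chain q)"
    and "\<forall>i<length (supp_chain p). p (supp_chain p ! i) = q (supp_chain q ! i)"
  shows "cum_weight p i = cum_weight q i"
proof -
  have "map p (take i (supp_chain p)) = map q (take i (supp_chain q))"
    by (rule nth_equalityI) (use assms in auto)
  then show ?thesis by (simp add: cum_weight_def)
qed

lemma Kequiv_imp_Sequiv:
  assumes p: "p \<in> Og" and q: "q \<in> Og" and K: "Kequiv G S g p q"
  shows "Sequiv (wfact_of p) (wfact_of q)"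
  unfolding Sequiv_def
proof (intro allI impI)
  fix s :: real assume s: "0 < s \<and> s < 1"
  note R = Kequiv_iff[OF p q, THEN iffD1, OF K]
  have cw: "cum_weight p = cum_weight q" using cum_weight_eq R by blast
  show "wfact_of p s = wfact_of q s"
  proof (cases "s \<in> cum_weight p ` {1..<length (supp_chain p)}")
    case True
    then obtain i where "i \<in> {1..<length (supp_chain p)}" "s = cum_weight p i" by blast
    then have i: "0 < i" "i < length (supp_chain p)" "s = cum_weight p i" by auto
    have "wfact_of p s = chain_label (supp_chain p) i" using wfact_of_at[OF p, of i] i by simp
    also have "\<dots> = inv (supp_chain p ! (i - 1)) \<otimes> supp_chain p ! i" by (rule chain_label_inner[OF i(1,2)])
    also have "\<dots> = inv (supp_chain q ! (i - 1)) \<otimes> supp_chain q ! i" using R i(1,2) by blast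
    also have "\<dots> = chain_label (supp_chain q) i" using chain_label_inner[OF i(1), of "supp_chain q"] R i(2) by simp
    also have "\<dots> = wfact_of q (cum_weight q i)" using wfact_of_at[OF q, of i] R i(2) by simp
    finally show ?thesis using cw i(3) by simp
  next
    case False
    have "s \<notin> cum_weight q ` {1..<length (supp_chain q)}" using False cw R by simp
    then have "wfact_of q s = \<one>" using s interior_points_wfact_of[OF q] by blast
    moreover have "wfact_of p s = \<one>" using False s interior_points_wfact_of[OF p] by blast
    ultimately show ?thesis by simp
  qed
qed

lemma Sequiv_imp_cum_weight_eq:
  assumes p: "p \<in> Og" and q: "q \<in> Og" and Sq: "Sequiv (wfact_of p) (wfact_of q)"
  shows "length (supp_chain p) = length (supp_chain q)" "cum_weight p = cum_weight q"
proof -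
  define m where "m = length (supp_chain p)"
  define m' where "m' = length (supp_chain q)"
  have "{s. 0 < s \<and> s < 1 \<and> wfact_of p s \<noteq> \<one>} = {s. 0 < s \<and> s < 1 \<and> wfact_of q s \<noteq> \<one>}"
    using Sq unfolding Sequiv_def by auto
  then have "set (map (cum_weight p) [1..<m]) = set (map (cum_weight q) [1..<m'])"
    using interior_points_wfact_of[OF p] interior_points_wfact_of[OF q] m_def m'_def by simp
  then have eqs: "map (cum_weight p) [1..<m] = map (cum_weight q) [1..<m']"
    using strict_sorted_equal[OF sorted_cum_weight[OF q, of m' 1] sorted_cum_weight[OF p, of m 1]]
    m_def m'_def by simp
  have "1 \<le> m" "1 \<le> m'" using supp_chain_nonempty[OF p] supp_chain_nonempty[OF q] m_def m'_def
    by (simp_all add: Suc_le_eq)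
  then show mm: "length (supp_chain p) = length (supp_chain q)"
    using arg_cong[OF eqs, of length] m_def m'_def by simp
  show "cum_weight p = cum_weight q"
  proof
    fix i
    consider "i = 0" | "1 \<le> i \<and> i < m" | "m \<le> i" by linarith
    then show "cum_weight p i = cum_weight q i"
    proof cases
      case 2
      then have "i - 1 < m - 1" "i - 1 < m' - 1" using mm m_def m'_def by linarith+
      then have "i - 1 < length [1..<m]" "i - 1 < length [1..<m']" by simp_all
      then have "map (cum_weight p) [1..<m] ! (i - 1) = cum_weight p i"
        and "map (cum_weight q) [1..<m'] ! (i - 1) = cum_weight q i"
        using 2 by (simp_all del: upt_Suc)
      then show ?thesis using eqs by simp
    next
      case 3
      then have "take i (supp_chain p) = supp_chain p" "take i (supp_chain q) = supp_chain q"
        using mm m_def by simp_all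
      then show ?thesis using sum_supp_chain[OF p] sum_supp_chain[OF q] by (simp add: cum_weight_def)
    qed simp
  qed
qed

lemma Sequiv_imp_Kequiv:
  assumes p: "p \<in> Og" and q: "q \<in> Og" and Sq: "Sequiv (wfact_of p) (wfact_of q)"
  shows "Kequiv G S g p q"
proof -
  note mm = Sequiv_imp_cum_weight_eq(1)[OF assms] and cw = Sequiv_imp_cum_weight_eq(2)[OF assms]
  have "p (supp_chain p ! i) = q (supp_chain q ! i)" if "i < length (supp_chain p)" for i
    using cum_weight_Suc[of i p] cum_weight_Suc[of i q] that mm cw by simp
  moreover have "inv (supp_chain p ! (i - 1)) \<otimes> supp_chain p ! i = inv (supp_chain q ! (i - 1)) \<otimes> supp_chain q ! i"
    if i: "0 < i" "i < length (supp_chain p)" for i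
  proof -
    have "0 < cum_weight p i" "cum_weight p i < 1"
      using cum_weight_strict_mono[OF p, of 0 i] cum_weight_strict_mono[OF p, of i "length (supp_chain p)"]
        cum_weight_last[OF p] i by auto
    then have "wfact_of p (cum_weight p i) = wfact_of q (cum_weight q i)"
      using Sq cw unfolding Sequiv_def by simp
    then show ?thesis using wfact_of_at[OF p, of i] wfact_of_at[OF q, of i] i mm
      chain_label_inner[of i "supp_chain p"] chain_label_inner[of i "supp_chain q"] by simp
  qed
  ultimately show ?thesis unfolding Kequiv_iff[OF p q] using mm by blast
qed

lemma Kequiv_iff_Sequiv: "p \<in> Og \<Longrightarrow> q \<in> Og \<Longrightarrow> Kequiv G S g p q \<longleftrightarrow> Sequiv (wfact_of p) (wfact_of q)"
  using Kequiv_imp_Sequiv Sequiv_imp_Kequiv by blast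

section \<open>Closed cells of weighted factorizations\<close>

lemma realize_eq_pos_prod: "length t = length fs \<Longrightarrow> realize G fs t = pos_prod (zip fs t)"
  unfolding realize_def pos_prod_def list_comprehension_filter
  by (simp add: zip_conv_map_nth filter_map comp_def)

definition spread_words :: "'a list list \<Rightarrow> ('a \<times> real) list \<Rightarrow> ('a \<times> real) list" where
  "spread_words ws L = concat (map2 (\<lambda>w q. map (\<lambda>l. (l, snd q)) w) ws L)"

lemma pos_prod_spread_words:
  assumes "length ws = length L" "\<forall>i<length L. wprod G (ws ! i) = fst (L ! i) \<and> set (ws ! i) \<subseteq> carrier G"
  shows "pos_prod (spread_words ws L) = pos_prod L"
  using assms
proof (induction ws L rule: list_induct2)
  case (Cons w ws q L)
  have w: "wprod G w = fst q" "set w \<subseteq> carrier G" using Cons.prems[rule_format, of 0] by auto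
  have ws: "\<forall>i<length L. wprod G (ws ! i) = fst (L ! i) \<and> set (ws ! i) \<subseteq> carrier G"
    using Cons.prems by force
  have L: "fst ` set L \<subseteq> carrier G"
  proof
    fix y assume "y \<in> fst ` set L"
    then obtain i where "i < length L" "y = fst (L ! i)" by (auto simp: in_set_conv_nth)
    then show "y \<in> carrier G" using ws wprod_closed by metis
  qed
  have "fst ` set (spread_words ws L) \<subseteq> carrier G"
  proof
    fix y assume "y \<in> fst ` set (spread_words ws L)"
    then obtain w' q' where wq: "(w', q') \<in> set (zip ws L)" "y \<in> set w'" by (auto simp: spread_words_def)
    then obtain i where "i < length L" "w' = ws ! i" using Cons.hyps by (auto simp: in_set_conv_nth)
    then show "y \<in> carrier G" using ws wq by auto
  qed
  moreover have "spread_words (w # ws) (q # L) = map (\<lambda>l. (l, snd q)) w @ spread_words ws L"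
    by (simp add: spread_words_def)
  moreover have "fst ` set (map (\<lambda>l. (l, snd q)) w) \<subseteq> carrier G" using w(2) by auto
  ultimately have "pos_prod (spread_words (w # ws) (q # L)) s = pos_prod (map (\<lambda>l. (l, snd q)) w) s \<otimes> pos_prod L s" for s
    using pos_prod_append Cons.IH[OF ws] by simp
  moreover have "pos_prod (map (\<lambda>l. (l, snd q)) w) s = (if snd q = s then fst q else \<one>)" for s
    using w(1) unfolding pos_prod_def by (auto simp: filter_map comp_def)
  ultimately show ?case using L by (cases q) (auto simp: pos_prod_Cons)
qed (simp add: spread_words_def)

definition pos_wlen :: "('a \<times> real) list \<Rightarrow> real \<Rightarrow> nat" where
  "pos_wlen L s = sum_list (map (len \<circ> fst) (filter (\<lambda>q. snd q = s) L))"

definition pos_coords :: "('a \<times> real) list \<Rightarrow> real list" where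
  "pos_coords L = concat (map (\<lambda>q. replicate (len (fst q)) (snd q)) L)"

lemma pos_coords_Cons: "pos_coords (q # L) = replicate (len (fst q)) (snd q) @ pos_coords L"
  by (simp add: pos_coords_def)

lemma length_pos_coords: "length (pos_coords L) = sum_list (map (len \<circ> fst) L)"
  by (induction L) (auto simp: pos_coords_def)

lemma set_pos_coords: "set (pos_coords L) \<subseteq> snd ` set L"
  by (induction L) (auto simp: pos_coords_def)

lemma sorted_pos_coords: "sorted (map snd L) \<Longrightarrow> sorted (pos_coords L)"
proof (induction L)
  case (Cons q L)
  then have "\<forall>y\<in>set (pos_coords L). snd q \<le> y" using set_pos_coords by fastforce
  then show ?case using Cons by (simp add: pos_coords_Cons sorted_append)
qed (simp add: pos_coords_def)

lemma zip_concat_pos_coords: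
  assumes "length ws = length fs" "length fs = length t" "\<forall>i<length fs. length (ws ! i) = len (fs ! i)"
  shows "zip (concat ws) (pos_coords (zip fs t)) = spread_words ws (zip fs t)"
  using assms
proof (induction ws fs t rule: list_induct3)
  case (Cons w ws f fs r t)
  have lw: "length w = len f" using Cons.prems[rule_format, of 0] by simp
  have "zip w (replicate (len f) r) = map (\<lambda>l. (l, r)) w"
    using lw[symmetric] by (induction w arbitrary: f) (auto simp: zip_replicate2)
  moreover have "zip (concat ws) (pos_coords (zip fs t)) = spread_words ws (zip fs t)"
    using Cons.IH Cons.prems by force
  ultimately show ?case using lw by (simp add: pos_coords_Cons zip_append spread_words_def)
qed (simp add: pos_coords_def spread_words_def)

lemma wprod_pos_prod_sorted:
  assumes "sorted (map snd L)" "sorted_wrt (<) D" "snd ` set L \<subseteq> set D" "fst ` set L \<subseteq> carrier G"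
  shows "wprod G (map (pos_prod L) D) = wprod G (map fst L)"
  using assms
proof (induction L arbitrary: D)
  case Nil
  then show ?case by (simp add: wprod_ones)
next
  case (Cons q L)
  obtain f r where q: "q = (f, r)" by force
  note prems = Cons.prems[unfolded q]
  obtain D1 D2 where D: "D = D1 @ r # D2" "\<forall>x\<in>set D1. x < r" "\<forall>x\<in>set D2. r < x"
    using sorted_wrt_less_split[OF prems(2)] prems(3) by auto
  have fL: "f \<in> carrier G" "fst ` set L \<subseteq> carrier G" using prems(4) by auto
  have "x \<notin> snd ` set ((f, r) # L)" if "x \<in> set D1" for x using D(2) that prems(1) by force
  then have D1: "\<forall>x\<in>set D1. pos_prod ((f, r) # L) x = \<one> \<and> pos_prod L x = \<one>"
    by (simp add: pos_prod_notin)
  have D2: "map (pos_prod ((f, r) # L)) D2 = map (pos_prod L) D2" using D(3) by (auto simp: pos_prod_Cons)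
  have c2: "set (map (pos_prod L) D2) \<subseteq> carrier G" using fL by auto
  have "pos_prod L r \<otimes> wprod G (map (pos_prod L) D2) = wprod G (map fst L)"
    using Cons.IH[of D] Cons.prems D(1) D1 c2 fL by (simp add: wprod_ones_append_Cons)
  moreover have "wprod G (map (pos_prod ((f, r) # L)) D) = (f \<otimes> pos_prod L r) \<otimes> wprod G (map (pos_prod L) D2)"
    using D(1) D1 c2 fL unfolding D2[symmetric] by (simp add: wprod_ones_append_Cons pos_prod_Cons)
  ultimately show ?case using q fL c2 by (simp add: m_assoc)
qed

lemma pos_wlen_Cons: "pos_wlen ((f, r) # L) s = (if r = s then len f else 0) + pos_wlen L s"
  by (simp add: pos_wlen_def)

lemma pos_wlen_notin: "s \<notin> snd ` set L \<Longrightarrow> pos_wlen L s = 0"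
  unfolding pos_wlen_def by (metis (mono_tags) filter_False image_eqI list.map(1) sum_list.Nil)

lemma sum_pos_wlen:
  assumes "distinct D" "snd ` set L \<subseteq> set D"
  shows "sum_list (map (pos_wlen L) D) = sum_list (map (len \<circ> fst) L)"
  using assms
proof (induction L)
  case (Cons q L)
  obtain f r where q: "q = (f, r)" by force
  have "pos_wlen (q # L) = (\<lambda>s. (if r = s then len f else 0) + pos_wlen L s)"
    using q by (simp add: fun_eq_iff pos_wlen_Cons)
  then have "sum_list (map (pos_wlen (q # L)) D) =
      sum_list (map (\<lambda>s. if r = s then len f else 0) D) + sum_list (map (pos_wlen L) D)"
    by (simp only: sum_list_addf)
  then show ?case using sum_list_map_single[OF Cons.prems(1)] Cons q by (simp add: comp_def)
qed (simp add: pos_wlen_def)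

lemma pos_coords_by_position:
  assumes "sorted (map snd L)" "sorted_wrt (<) D" "snd ` set L \<subseteq> set D"
  shows "concat (map (\<lambda>s. replicate (pos_wlen L s) s) D) = pos_coords L"
  using assms
proof (induction L arbitrary: D)
  case Nil
  then show ?case by (simp add: pos_wlen_def pos_coords_def)
next
  case (Cons q L)
  obtain f r where q: "q = (f, r)" by force
  note prems = Cons.prems[unfolded q]
  obtain D1 D2 where D: "D = D1 @ r # D2" "\<forall>x\<in>set D1. x < r" "\<forall>x\<in>set D2. r < x"
    using sorted_wrt_less_split[OF prems(2)] prems(3) by auto
  let ?F = "\<lambda>s. replicate (pos_wlen ((f, r) # L) s) s" and ?F' = "\<lambda>s. replicate (pos_wlen L s) s"
  have "x \<notin> snd ` set ((f, r) # L)" if "x \<in> set D1" for x using D(2) that prems(1) by force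
  then have D1: "concat (map ?F D1) = []" "concat (map ?F' D1) = []" by (simp_all add: pos_wlen_notin)
  have D2: "map ?F D2 = map ?F' D2" using D(3) by (auto simp: pos_wlen_Cons)
  have "concat (map ?F D) = concat (map ?F D1) @ ?F r @ concat (map ?F D2)" using D(1) by simp
  also have "\<dots> = replicate (len f) r @ concat (map ?F' D1) @ ?F' r @ concat (map ?F' D2)"
    unfolding D1 D2 by (simp add: pos_wlen_Cons replicate_add)
  also have "\<dots> = replicate (len f) r @ concat (map ?F' D)" using D(1) by simp
  also have "\<dots> = pos_coords ((f, r) # L)" using Cons.IH[of D] Cons.prems by (simp add: pos_coords_Cons)
  finally show ?case using q by simp
qed

lemma lin_factD:
  assumes "lin_fact G S g fs"
  shows "2 \<le> length fs" "set fs \<subseteq> Mon G S" "\<And>i. 0 < i \<Longrightarrow> i + 1 < length fs \<Longrightarrow> fs ! i \<noteq> \<one>"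
    "sum_list (map len fs) = n" "wprod G fs = g"
  using assms unfolding lin_fact_def by auto

lemma pos_prod_Mon: "fst ` set L \<subseteq> Mon G S \<Longrightarrow> pos_prod L s \<in> Mon G S"
  unfolding pos_prod_def by (rule wprod_in_Mon) auto

lemma wlen_pos_prod_le: "fst ` set L \<subseteq> Mon G S \<Longrightarrow> len (pos_prod L s) \<le> pos_wlen L s"
  unfolding pos_prod_def pos_wlen_def using wlen_wprod_le_sum[of "map fst (filter (\<lambda>q. snd q = s) L)"]
  by (auto simp: comp_def)

context
  fixes fs t
  assumes lf: "lin_fact G S g fs" and cp: "cell_pos (length fs) t"
begin

lemma cell_length: "length t = length fs"
  using cp by (simp add: cell_pos_def)

lemma cell_factors: "fst ` set (zip fs t) \<subseteq> Mon G S" "fst ` set (zip fs t) \<subseteq> carrier G"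
  using lin_factD(2)[OF lf] set_zip_leftD by fastforce+

lemma cell_positions: "snd ` set (zip fs t) = set t"
  using cell_length by (metis map_snd_zip set_map)

text \<open>Since the lengths of all factors add up to that of g, the factors placed at one position
  multiply without cancellation.\<close>
lemma wlen_pos_prod_cell: "s \<in> set t \<Longrightarrow> len (pos_prod (zip fs t) s) = pos_wlen (zip fs t) s"
proof -
  assume s: "s \<in> set t"
  let ?L = "zip fs t" and ?D = "sorted_list_of_set (set t)"
  have D: "sorted_wrt (<) ?D" "set ?D = set t" "distinct ?D"
    by (simp_all add: sorted_list_of_set.strict_sorted_key_list_of_set)
  have "wprod G (map (pos_prod ?L) ?D) = g"
    using wprod_pos_prod_sorted[of ?L ?D] cell_length cp D cell_positions cell_factors lin_factD(5)[OF lf]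
    by (simp add: cell_pos_def)
  then have "n \<le> sum_list (map len (map (pos_prod ?L) ?D))"
    using wlen_wprod_le_sum[of "map (pos_prod ?L) ?D"] pos_prod_Mon[OF cell_factors(1)] by auto
  also have "\<dots> = sum_list (map (len \<circ> pos_prod ?L) ?D)" by simp
  finally have "n \<le> sum_list (map (len \<circ> pos_prod ?L) ?D)" .
  moreover have "sum_list (map (len \<circ> pos_prod ?L) ?D) \<le> sum_list (map (pos_wlen ?L) ?D)"
    by (rule sum_list_mono) (use wlen_pos_prod_le[OF cell_factors(1)] in auto)
  moreover have "sum_list (map (pos_wlen ?L) ?D) = n"
    using sum_pos_wlen[of ?D ?L] D cell_positions lin_factD(4)[OF lf] cell_length
    by (simp add: map_map[symmetric] del: map_map)
  ultimately have "sum_list (map (len \<circ> pos_prod ?L) ?D) = sum_list (map (pos_wlen ?L) ?D)"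
    by linarith
  then have "\<forall>s\<in>set ?D. (len \<circ> pos_prod ?L) s = pos_wlen ?L s"
    by (rule sum_list_eq_imp_eq_if_le[OF D(3)]) (simp add: wlen_pos_prod_le[OF cell_factors(1)])
  then show ?thesis using s D(2) by simp
qed

lemma pos_prod_cell_neq_one:
  assumes s: "s \<in> set t" "0 < s" "s < 1"
  shows "pos_prod (zip fs t) s \<noteq> \<one>"
proof -
  obtain i where i: "i < length t" "t ! i = s" using s(1) by (auto simp: in_set_conv_nth)
  have "t \<noteq> []" using s by auto
  then have "t ! 0 = 0" "t ! (length t - 1) = 1"
    using cp hd_conv_nth last_conv_nth by (fastforce simp: cell_pos_def)+
  then have "i \<noteq> 0" "i \<noteq> length t - 1" using i s by (metis less_irrefl)+
  then have "fs ! i \<noteq> \<one>" "fs ! i \<in> Mon G S" using lin_factD(3)[OF lf, of i] lin_factD(2)[OF lf] i cell_length by auto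
  then have "1 \<le> len (fs ! i)" using wlen_eq_0_imp_one by (cases "len (fs ! i)") auto
  moreover have "(fs ! i, s) \<in> set (filter (\<lambda>q. snd q = s) (zip fs t))"
    using i cell_length by (auto simp: in_set_conv_nth intro!: exI[of _ i])
  then have "len (fs ! i) \<in> set (map (len \<circ> fst) (filter (\<lambda>q. snd q = s) (zip fs t)))" by force
  then have "len (fs ! i) \<le> pos_wlen (zip fs t) s"
    unfolding pos_wlen_def by (rule member_le_sum_list) simp
  ultimately show ?thesis using wlen_pos_prod_cell[OF s(1)] by auto
qed

lemma wpts_realize: "wpts G (realize G fs t) = sorted_list_of_set (set t)"
proof -
  have "t \<noteq> []" using cell_length lin_factD(1)[OF lf] by auto
  then have "{0, 1} \<subseteq> set t" using cp hd_in_set last_in_set by (fastforce simp: cell_pos_def)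
  moreover have "{s. 0 < s \<and> s < 1 \<and> pos_prod (zip fs t) s \<noteq> \<one>} = {s\<in>set t. 0 < s \<and> s < 1}"
    using pos_prod_notin cell_positions pos_prod_cell_neq_one by blast
  moreover have "set t \<subseteq> {0, 1} \<union> {s\<in>set t. 0 < s \<and> s < 1}"
    using cell_pos_range[OF cp] by fastforce
  ultimately have "{0, 1} \<union> {s. 0 < s \<and> s < 1 \<and> pos_prod (zip fs t) s \<noteq> \<one>} = set t" by blast
  then show ?thesis unfolding wpts_def realize_eq_pos_prod[OF cell_length] by simp
qed

lemma wcoord_realize: "wcoord G S (realize G fs t) = pos_coords (zip fs t)"
proof -
  let ?D = "sorted_list_of_set (set t)"
  have "wcoord G S (realize G fs t) = concat (map (\<lambda>s. replicate (len (pos_prod (zip fs t) s)) s) ?D)"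
    unfolding wcoord_def wpts_realize unfolding realize_eq_pos_prod[OF cell_length] ..
  also have "\<dots> = concat (map (\<lambda>s. replicate (pos_wlen (zip fs t) s) s) ?D)"
    by (intro arg_cong[where f = concat] map_cong) (simp_all add: wlen_pos_prod_cell)
  also have "\<dots> = pos_coords (zip fs t)"
    using cp cell_positions cell_length
    by (intro pos_coords_by_position) (simp_all add: cell_pos_def sorted_list_of_set.strict_sorted_key_list_of_set)
  finally show ?thesis .
qed

end

definition prefix_chain :: "'a list \<Rightarrow> 'a list" where
  "prefix_chain w = map (\<lambda>j. wprod G (take j w)) [0..<length w + 1]"

context
  fixes w assumes w: "set w \<subseteq> S" "wprod G w = g" "length w = n"
begin

lemma length_prefix_chain: "length (prefix_chain w) = n + 1"
  using w(3) by (simp add: prefix_chain_def)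

lemma prefix_chain_nth: "j \<le> n \<Longrightarrow> prefix_chain w ! j = wprod G (take j w)"
  using w(3) by (simp add: prefix_chain_def del: upt_Suc)

lemma prefix_chain_Mon: "j \<le> n \<Longrightarrow> prefix_chain w ! j \<in> Mon G S"
  using prefix_chain_nth wprod_Mon w(1) set_take_subset by (metis subset_trans)

lemma wlen_prefix_chain_nth: "j \<le> n \<Longrightarrow> len (prefix_chain w ! j) = j"
  using geodesic_take_drop(1)[OF w(1)] w prefix_chain_nth by simp

lemma prefix_chain_pleq:
  assumes "j \<le> j'" "j' \<le> n"
  shows "ple (prefix_chain w ! j) (prefix_chain w ! j')"
proof -
  define u where "u = take (j' - j) (drop j w)"
  have u: "set u \<subseteq> S" "set (take j w) \<subseteq> carrier G" "set u \<subseteq> carrier G"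
    using w(1) S_carrier set_take_subset set_drop_subset unfolding u_def by (metis subset_trans)+
  have "take j' w = take j w @ u" unfolding u_def using assms by (metis le_add_diff_inverse take_add)
  then have e: "prefix_chain w ! j' = prefix_chain w ! j \<otimes> wprod G u"
    using prefix_chain_nth assms wprod_append[OF u(2,3)] by simp
  have "len (wprod G u) \<le> j' - j" using wlen_wprod_le_length[OF u(1)] unfolding u_def by simp
  moreover have "len (prefix_chain w ! j') \<le> len (prefix_chain w ! j) + len (wprod G u)"
    using e wlen_mult_le[OF prefix_chain_Mon wprod_Mon[OF u(1)], of j] assms by simp
  moreover have "len (prefix_chain w ! j \<otimes> wprod G u) = j'"
    using e wlen_prefix_chain_nth[of j'] assms by simp
  moreover have "len (prefix_chain w ! j) = j" "len (prefix_chain w ! j') = j'"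
    using wlen_prefix_chain_nth assms by simp_all
  ultimately have "len (prefix_chain w ! j \<otimes> wprod G u) = len (prefix_chain w ! j) + len (wprod G u)"
    using assms by linarith
  then show ?thesis using pleq_mult[OF prefix_chain_Mon wprod_Mon[OF u(1)], of j] e assms by simp
qed

lemma prefix_chain_is_maxchain: "is_maxchain G S g (prefix_chain w)"
proof (rule full_chain_is_maxchain[OF _ length_prefix_chain])
  have "prefix_chain w ! n = g" using prefix_chain_nth w by simp
  have "set (prefix_chain w) \<subseteq> interval G S g"
  proof
    fix z assume "z \<in> set (prefix_chain w)"
    then obtain j where "j < n + 1" "z = prefix_chain w ! j" using length_prefix_chain by (metis in_set_conv_nth)
    then show "z \<in> interval G S g"
      using prefix_chain_pleq[of j n] \<open>prefix_chain w ! n = g\<close> by (simp add: interval_def)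
  qed
  moreover have "sorted_wrt slt (prefix_chain w)"
    unfolding sorted_wrt_iff_nth_less
  proof (intro allI impI)
    fix i j assume "i < j" "j < length (prefix_chain w)"
    then show "slt (prefix_chain w ! i) (prefix_chain w ! j)"
      using prefix_chain_pleq[of i j] wlen_prefix_chain_nth[of i] wlen_prefix_chain_nth[of j]
        length_prefix_chain by auto
  qed
  ultimately show "chain (prefix_chain w)" unfolding is_chain_def by blast
qed

lemma prefix_chain_label: "0 < i \<Longrightarrow> i \<le> n \<Longrightarrow> inv (prefix_chain w ! (i - 1)) \<otimes> prefix_chain w ! i = w ! (i - 1)"
proof -
  assume i: "0 < i" "i \<le> n"
  then have k: "i - 1 < length w" using w(3) by simp
  have c: "set (take (i - 1) w) \<subseteq> carrier G" "w ! (i - 1) \<in> carrier G"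
    using w(1) S_carrier set_take_subset nth_mem[OF k] by (metis subset_trans, blast)
  have "take i w = take (i - 1) w @ [w ! (i - 1)]" using take_Suc_conv_app_nth[OF k] i by simp
  then have "prefix_chain w ! i = prefix_chain w ! (i - 1) \<otimes> w ! (i - 1)"
    using prefix_chain_nth i wprod_append[OF c(1)] c(2) by simp
  then show ?thesis using prefix_chain_Mon[of "i - 1"] c(2) i by (simp add: m_assoc[symmetric])
qed

end

definition geodesic_spelling :: "'a list list \<Rightarrow> 'a list \<Rightarrow> bool" where
  "geodesic_spelling ws fs \<longleftrightarrow> length ws = length fs \<and>
     (\<forall>i<length fs. set (ws ! i) \<subseteq> S \<and> length (ws ! i) = len (fs ! i) \<and> wprod G (ws ! i) = fs ! i)"

lemma geodesic_spelling_exists: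
  assumes "set fs \<subseteq> Mon G S"
  shows "\<exists>ws. geodesic_spelling ws fs"
proof -
  have "\<forall>f\<in>set fs. \<exists>w. set w \<subseteq> S \<and> length w = len f \<and> wprod G w = f"
    using assms geodesic_word_exists by blast
  then obtain h where "\<forall>f\<in>set fs. set (h f) \<subseteq> S \<and> length (h f) = len f \<and> wprod G (h f) = f"
    by metis
  then show ?thesis unfolding geodesic_spelling_def by (intro exI[of _ "map h fs"]) simp
qed

lemma geodesic_spelling_concat:
  assumes "lin_fact G S g fs" "geodesic_spelling ws fs"
  shows "set (concat ws) \<subseteq> S" "wprod G (concat ws) = g" "length (concat ws) = n"
proof -
  have ws: "length ws = length fs" "\<And>i. i < length fs \<Longrightarrow> set (ws ! i) \<subseteq> S \<and> length (ws ! i) = len (fs ! i) \<and> wprod G (ws ! i) = fs ! i"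
    using assms(2) unfolding geodesic_spelling_def by auto
  then have "\<forall>w\<in>set ws. set w \<subseteq> S" by (metis in_set_conv_nth)
  then show S: "set (concat ws) \<subseteq> S" by auto
  have "map length ws = map len fs" "map (wprod G) ws = fs" using ws by (auto intro: nth_equalityI)
  then show "wprod G (concat ws) = g" "length (concat ws) = n"
    using wprod_concat S S_carrier lin_factD(4,5)[OF assms(1)] by (auto simp: length_concat)
qed

definition cell_coord :: "'a list \<Rightarrow> real list \<Rightarrow> nat \<Rightarrow> real" where
  "cell_coord fs t i = (if i = 0 then 0 else if i \<le> n then pos_coords (zip fs t) ! (i - 1) else 1)"

text \<open>The point of the simplex of the maximal chain c whose cumulative weights are the cell
  coordinates.\<close>
definition cell_point :: "'a list \<Rightarrow> 'a list \<Rightarrow> real list \<Rightarrow> 'a \<Rightarrow> real" where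
  "cell_point c fs t z = (if z \<in> set c then cell_coord fs t (len z + 1) - cell_coord fs t (len z) else 0)"

lemma cell_coord_0 [simp]: "cell_coord fs t 0 = 0"
  by (simp add: cell_coord_def)

lemma cell_coord_last: "cell_coord fs t (n + 1) = 1"
  by (simp add: cell_coord_def)

context
  fixes fs t
  assumes lf: "lin_fact G S g fs" and cp: "cell_pos (length fs) t"
begin

lemma length_cell_coords: "length (pos_coords (zip fs t)) = n"
  using length_pos_coords[of "zip fs t"] lin_factD(4)[OF lf] cell_length[OF lf cp]
  by (simp add: map_map[symmetric] del: map_map)

lemma cell_coord_mono:
  assumes "i \<le> j"
  shows "cell_coord fs t i \<le> cell_coord fs t j"
proof -
  let ?E = "pos_coords (zip fs t)"
  have "sorted t" using cp by (simp add: cell_pos_def)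
  moreover have "map snd (zip fs t) = t" using map_snd_zip[of fs t] cell_length[OF lf cp] by simp
  ultimately have so: "sorted ?E" using sorted_pos_coords[of "zip fs t"] by simp
  have rng: "0 \<le> ?E ! k \<and> ?E ! k \<le> 1" if "k < n" for k
  proof -
    have "k < length ?E" using that length_cell_coords by simp
    then have "?E ! k \<in> snd ` set (zip fs t)" by (rule subsetD[OF set_pos_coords nth_mem])
    then show ?thesis using cell_positions[OF lf cp] cell_pos_range[OF cp] by auto
  qed
  consider "i = 0" | "0 < i \<and> j \<le> n" | "0 < i \<and> i \<le> n \<and> n < j" | "n < i" using assms by linarith
  then show ?thesis
  proof cases
    case 1 then show ?thesis unfolding cell_coord_def using rng[of "j - 1"] by auto
  next
    case 2 then show ?thesis
      unfolding cell_coord_def using sorted_nth_mono[OF so, of "i - 1" "j - 1"] length_cell_coords assms by auto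
  next
    case 3 then show ?thesis unfolding cell_coord_def using rng[of "i - 1"] by auto
  next
    case 4 then show ?thesis unfolding cell_coord_def using assms by auto
  qed
qed

context
  fixes c assumes mc: "is_maxchain G S g c"
begin

lemma cell_point_nth: "j \<le> n \<Longrightarrow> cell_point c fs t (c ! j) = cell_coord fs t (j + 1) - cell_coord fs t j"
  using maxchain_wlen_nth[OF mc] maxchain_length[OF mc] by (simp add: cell_point_def)

lemma supp_cell_point: "supp (cell_point c fs t) \<subseteq> set c"
  unfolding supp_def cell_point_def by auto

lemma sum_take_cell_point: "i \<le> n + 1 \<Longrightarrow> sum_list (map (cell_point c fs t) (take i c)) = cell_coord fs t i"
proof -
  assume i: "i \<le> n + 1"
  then have "sum_list (map (cell_point c fs t) (take i c)) = (\<Sum>j<i. cell_point c fs t (c ! j))"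
    using maxchain_length[OF mc] by (simp add: sum_list_sum_nth atLeast0LessThan min_def)
  also have "\<dots> = (\<Sum>j<i. cell_coord fs t (Suc j) - cell_coord fs t j)" using cell_point_nth i by simp
  finally show ?thesis by (simp add: sum_lessThan_telescope)
qed

lemma cell_point_in_Og: "cell_point c fs t \<in> Og"
  unfolding Opts_def
proof (intro CollectI conjI allI ballI)
  fix z show "0 \<le> cell_point c fs t z" unfolding cell_point_def using cell_coord_mono by simp
next
  show "finite (supp (cell_point c fs t))" using supp_cell_point finite_subset by blast
next
  show "supp (cell_point c fs t) \<subseteq> interval G S g"
    using supp_cell_point maxchain_is_chain[OF mc] unfolding is_chain_def by blast
next
  fix x y assume "x \<in> supp (cell_point c fs t)" "y \<in> supp (cell_point c fs t)"
  then show "ple x y \<or> ple y x" using chain_comparable[OF maxchain_is_chain[OF mc]] supp_cell_point by blast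
next
  have "sum (cell_point c fs t) (supp (cell_point c fs t)) = sum (cell_point c fs t) (set c)"
    by (rule sum.mono_neutral_left) (use supp_cell_point in \<open>auto simp: supp_def\<close>)
  also have "\<dots> = sum_list (map (cell_point c fs t) c)"
    using sum_list_distinct_conv_sum_set[OF chain_distinct[OF maxchain_is_chain[OF mc]]] by metis
  also have "\<dots> = sum_list (map (cell_point c fs t) (take (n + 1) c))"
    using maxchain_length[OF mc] by simp
  finally show "sum (cell_point c fs t) (supp (cell_point c fs t)) = 1"
    using sum_take_cell_point cell_coord_last by simp
qed

lemma ocoord_cell_point: "j \<le> n + 1 \<Longrightarrow> ocoord c (cell_point c fs t) j = 1 - cell_coord fs t (n + 1 - j)"
proof -
  assume j: "j \<le> n + 1"
  have "ocoord c (cell_point c fs t) j = (\<Sum>i\<in>{n + 1 - j..<n + 1}. cell_coord fs t (Suc i) - cell_coord fs t i)"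
    unfolding ocoord_def maxchain_length[OF mc] by (rule sum.cong) (auto simp: cell_point_nth)
  also have "\<dots> = cell_coord fs t (n + 1) - cell_coord fs t (n + 1 - j)" by (rule sum_Suc_diff') simp
  finally show ?thesis using cell_coord_last by simp
qed

end

end

text \<open>In the simplex of a maximal chain the orthoscheme coordinates are the cell coordinates
  in reverse order, so the two cell metrics agree.\<close>
lemma odist_cell_point:
  assumes "lin_fact G S g fs" "cell_pos (length fs) t" "cell_pos (length fs) t'" "is_maxchain G S g c"
  shows "odist c (cell_point c fs t) (cell_point c fs t') = wdist G S (realize G fs t) (realize G fs t')"
proof -
  let ?h = "\<lambda>i. (cell_coord fs t i - cell_coord fs t' i)\<^sup>2"
  note oc = ocoord_cell_point[OF assms(1,2,4)] ocoord_cell_point[OF assms(1,3,4)]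
  have "(\<Sum>j\<in>{1..length c - 1}. (ocoord c (cell_point c fs t) j - ocoord c (cell_point c fs t') j)\<^sup>2)
      = (\<Sum>j\<in>{1..n}. ?h (n + 1 - j))"
    using maxchain_length[OF assms(4)] by (intro sum.cong) (auto simp: oc power2_commute)
  also have "\<dots> = (\<Sum>j\<in>{1..n}. ?h j)"
    using sum.atLeastAtMost_rev[of "\<lambda>j. ?h (n + 1 - j)" 1 n] by simp
  also have "\<dots> = (\<Sum>k<n. ?h (Suc k))" using sum.atLeast1_atMost_eq[of ?h n] by simp
  also have "\<dots> = (\<Sum>k<n. (pos_coords (zip fs t) ! k - pos_coords (zip fs t') ! k)\<^sup>2)"
    by (rule sum.cong) (auto simp: cell_coord_def)
  also have "\<dots> = sum_list (map (\<lambda>(a, b). (a - b)\<^sup>2) (zip (pos_coords (zip fs t)) (pos_coords (zip fs t'))))"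
    using length_cell_coords[OF assms(1,2)] length_cell_coords[OF assms(1,3)]
    by (simp add: sum_list_sum_nth atLeast0LessThan)
  finally show ?thesis
    unfolding odist_def wdist_def wcoord_realize[OF assms(1,2)] wcoord_realize[OF assms(1,3)] by simp
qed

lemma placed_labels_cell_point:
  assumes lf: "lin_fact G S g fs" and sp: "geodesic_spelling ws fs" and cp: "cell_pos (length fs) t"
  defines "c \<equiv> prefix_chain (concat ws)"
  shows "placed_labels (cell_point c fs t) \<one> 0 c = (\<one>, 0) # zip (concat ws) (pos_coords (zip fs t)) @ [(\<one>, 1)]"
proof (rule nth_equalityI)
  note w = geodesic_spelling_concat[OF lf sp]
  note mc = prefix_chain_is_maxchain[OF w]
  have lc: "length c = n + 1" using length_prefix_chain[OF w] c_def by simp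
  then have "c \<noteq> []" by auto
  have lE: "length (pos_coords (zip fs t)) = n" by (rule length_cell_coords[OF lf cp])
  show "length (placed_labels (cell_point c fs t) \<one> 0 c) = length ((\<one>, 0) # zip (concat ws) (pos_coords (zip fs t)) @ [(\<one>, 1)])"
    using lc lE w(3) by simp
  fix i assume "i < length (placed_labels (cell_point c fs t) \<one> 0 c)"
  then have i: "i \<le> n + 1" using lc by simp
  have entry: "placed_labels (cell_point c fs t) \<one> 0 c ! i = (inv ((\<one> # c) ! i) \<otimes> (c @ [g]) ! i, cell_coord fs t i)"
    using placed_labels_nth[of i c] i lc sum_take_cell_point[OF lf cp mc[folded c_def] i] by simp
  consider "i = 0" | "0 < i \<and> i \<le> n" | "i = n + 1" using i by linarith
  then show "placed_labels (cell_point c fs t) \<one> 0 c ! i = ((\<one>, 0) # zip (concat ws) (pos_coords (zip fs t)) @ [(\<one>, 1)]) ! i"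
  proof cases
    case 1
    then show ?thesis using entry maxchain_nth_0[OF mc] \<open>c \<noteq> []\<close> c_def by (simp add: nth_append)
  next
    case 2
    then have "i - 1 < n" by linarith
    from 2 have "(\<one> # c) ! i = c ! (i - 1)" "(c @ [g]) ! i = c ! i" using lc by (simp_all add: nth_append)
    moreover have "((\<one>, 0) # zip (concat ws) (pos_coords (zip fs t)) @ [(\<one>, 1)]) ! i
        = (concat ws ! (i - 1), pos_coords (zip fs t) ! (i - 1))"
      using 2 lE w(3) \<open>i - 1 < n\<close> by (simp add: nth_append)
    ultimately show ?thesis
      using entry prefix_chain_label[OF w] 2 c_def by (simp add: cell_coord_def)
  next
    case 3
    then have "(\<one> # c) ! i = g" "(c @ [g]) ! i = g" using maxchain_nth_last[OF mc] lc c_def by (simp_all add: nth_append)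
    then show ?thesis using entry 3 lE w(3) cell_coord_last by (simp add: nth_append)
  qed
qed

lemma wfact_of_cell_point:
  assumes lf: "lin_fact G S g fs" and sp: "geodesic_spelling ws fs" and cp: "cell_pos (length fs) t"
  shows "wfact_of (cell_point (prefix_chain (concat ws)) fs t) = realize G fs t"
proof -
  let ?c = "prefix_chain (concat ws)" and ?L = "zip (concat ws) (pos_coords (zip fs t))"
  note w = geodesic_spelling_concat[OF lf sp]
  note mc = prefix_chain_is_maxchain[OF w]
  have "fst ` set ?L \<subseteq> set (concat ws)" by (auto dest: set_zip_leftD simp del: set_concat)
  then have L: "fst ` set ?L \<subseteq> carrier G" using w(1) S_carrier by blast
  have spelled: "length ws = length fs" "\<forall>i<length fs. length (ws ! i) = len (fs ! i)"
    "\<forall>i<length (zip fs t). wprod G (ws ! i) = fst (zip fs t ! i) \<and> set (ws ! i) \<subseteq> carrier G"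
    using sp S_carrier cell_length[OF lf cp] unfolding geodesic_spelling_def by auto
  have "wfact_of (cell_point ?c fs t) = pos_prod (placed_labels (cell_point ?c fs t) \<one> 0 ?c)"
    using wfact_of_chain[OF cell_point_in_Og[OF lf cp mc] maxchain_is_chain[OF mc] supp_cell_point[OF lf cp mc]] .
  also have "\<dots> = pos_prod ((\<one>, 0) # ?L @ [(\<one>, 1)])" using placed_labels_cell_point[OF lf sp cp] by simp
  also have "\<dots> = pos_prod ?L"
    using L pos_prod_append[OF L, of "[(\<one>, 1)]"] by (simp add: fun_eq_iff pos_prod_Cons)
  also have "?L = spread_words ws (zip fs t)"
    using zip_concat_pos_coords spelled(1,2) cell_length[OF lf cp] by simp
  also have "pos_prod \<dots> = pos_prod (zip fs t)"
    using pos_prod_spread_words spelled(1,3) cell_length[OF lf cp] by simp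
  finally show ?thesis using realize_eq_pos_prod[OF cell_length[OF lf cp]] by simp
qed

lemma wstep_imp_ostep:
  assumes "wstep G S g u v r"
  shows "\<exists>x\<in>Og. \<exists>y\<in>Og. wfact_of x = u \<and> wfact_of y = v \<and> ostep G S g x y r"
proof -
  obtain fs t t' where step: "lin_fact G S g fs" "cell_pos (length fs) t" "cell_pos (length fs) t'"
    "u = realize G fs t" "v = realize G fs t'" "r = wdist G S u v"
    using assms unfolding wstep_def by blast
  obtain ws where sp: "geodesic_spelling ws fs"
    using geodesic_spelling_exists lin_factD(2)[OF step(1)] by blast
  define c where "c = prefix_chain (concat ws)"
  have mc: "is_maxchain G S g c"
    unfolding c_def by (rule prefix_chain_is_maxchain[OF geodesic_spelling_concat[OF step(1) sp]])
  have "r = odist c (cell_point c fs t) (cell_point c fs t')"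
    using odist_cell_point[OF step(1-3) mc] step(4-6) by simp
  then have "ostep G S g (cell_point c fs t) (cell_point c fs t') r"
    unfolding ostep_def using mc supp_cell_point[OF step(1,2) mc] supp_cell_point[OF step(1,3) mc] by blast
  then show ?thesis
    using cell_point_in_Og[OF step(1,2) mc] cell_point_in_Og[OF step(1,3) mc] step(4,5)
      wfact_of_cell_point[OF step(1) sp step(2)] wfact_of_cell_point[OF step(1) sp step(3)] c_def
    by blast
qed

lemma realize_wpts:
  assumes "u \<in> WFactI G S g"
  shows "cell_pos (length (map u (wpts G u))) (wpts G u)" "realize G (map u (wpts G u)) (wpts G u) = u"
proof -
  define A where "A = {0, 1} \<union> {t. 0 < t \<and> t < 1 \<and> u t \<noteq> \<one>}"
  have u: "\<forall>t. t \<notin> {0..1} \<longrightarrow> u t = \<one>" "finite {t. u t \<noteq> \<one>}" "lin_fact G S g (map u (wpts G u))"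
    using assms unfolding WFactI_def by auto
  then have fA: "finite A" unfolding A_def by (auto intro: finite_subset)
  have A: "0 \<in> A" "1 \<in> A" "\<forall>x\<in>A. 0 \<le> x \<and> x \<le> 1" unfolding A_def by auto
  have w: "wpts G u = sorted_list_of_set A" unfolding wpts_def A_def ..
  show cp: "cell_pos (length (map u (wpts G u))) (wpts G u)"
    unfolding cell_pos_def w using sorted_list_of_set_hd_last[OF fA A] by simp
  let ?fs = "map u (wpts G u)" and ?t = "wpts G u"
  have "pos_prod (zip ?fs ?t) s = u s" for s
  proof (cases "s \<in> set ?t")
    case True
    then obtain i where i: "i < length ?t" "?t ! i = s" by (auto simp: in_set_conv_nth)
    then have "zip ?fs ?t ! i = (u s, s)" "i < length (zip ?fs ?t)" by simp_all
    then have "(u s, s) \<in> set (zip ?fs ?t)" using nth_mem by metis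
    moreover have "distinct (map snd (zip ?fs ?t))" using fA by (simp add: w)
    ultimately show ?thesis using pos_prod_distinct cell_factors(2)[OF u(3) cp] by blast
  next
    case False
    then have "s \<notin> A" using fA by (simp add: w)
    then have "u s = \<one>" using u(1) unfolding A_def by auto
    moreover have "s \<notin> snd ` set (zip ?fs ?t)" using False cell_positions[OF u(3) cp] by simp
    ultimately show ?thesis using pos_prod_notin by simp
  qed
  then show "realize G ?fs ?t = u" using realize_eq_pos_prod[of ?t ?fs] by auto
qed

lemma wfact_of_surj: "u \<in> WFactI G S g \<Longrightarrow> \<exists>p\<in>Og. wfact_of p = u"
proof -
  assume u: "u \<in> WFactI G S g"
  let ?fs = "map u (wpts G u)"
  have lf: "lin_fact G S g ?fs" using u unfolding WFactI_def by auto
  obtain ws where sp: "geodesic_spelling ws ?fs" using geodesic_spelling_exists lin_factD(2)[OF lf] by blast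
  have mc: "is_maxchain G S g (prefix_chain (concat ws))"
    by (rule prefix_chain_is_maxchain[OF geodesic_spelling_concat[OF lf sp]])
  have "wfact_of (cell_point (prefix_chain (concat ws)) ?fs (wpts G u)) = u"
    using wfact_of_cell_point[OF lf sp realize_wpts(1)[OF u]] realize_wpts(2)[OF u] by simp
  then show ?thesis using cell_point_in_Og[OF lf realize_wpts(1)[OF u] mc] by blast
qed

section \<open>The cell of a maximal chain\<close>

lemma pos_coords_unit_factors:
  "length ls = length P \<Longrightarrow> \<forall>l\<in>set ls. len l = 1 \<Longrightarrow> pos_coords (zip ls P) = P"
  by (induction ls P rule: list_induct2) (simp_all add: pos_coords_def)

definition chain_labels :: "'a list \<Rightarrow> 'a list" where
  "chain_labels c = map (\<lambda>i. inv (c ! (i - 1)) \<otimes> c ! i) [1..<n+1]"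

definition chain_fact :: "'a list \<Rightarrow> 'a list" where
  "chain_fact c = \<one> # chain_labels c @ [\<one>]"

definition chain_spelling :: "'a list \<Rightarrow> 'a list list" where
  "chain_spelling c = [] # map (\<lambda>l. [l]) (chain_labels c) @ [[]]"

definition partial_weight :: "'a list \<Rightarrow> ('a \<Rightarrow> real) \<Rightarrow> nat \<Rightarrow> real" where
  "partial_weight c x i = sum_list (map x (take i c))"

definition chain_positions :: "'a list \<Rightarrow> ('a \<Rightarrow> real) \<Rightarrow> real list" where
  "chain_positions c x = map (partial_weight c x) [0..<n+2]"

context
  fixes c assumes mc: "is_maxchain G S g c"
begin

lemma length_chain_labels: "length (chain_labels c) = n"
  by (simp add: chain_labels_def del: upt_Suc)

lemma chain_labels_nth: "k < n \<Longrightarrow> chain_labels c ! k = inv (c ! k) \<otimes> c ! Suc k"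
  by (simp add: chain_labels_def del: upt_Suc)

lemma chain_labels_S_wlen: "l \<in> set (chain_labels c) \<Longrightarrow> l \<in> S \<and> len l = 1"
proof -
  assume "l \<in> set (chain_labels c)"
  then obtain i where "i \<in> set [1..<n+1]" "l = inv (c ! (i - 1)) \<otimes> c ! i"
    unfolding chain_labels_def by (auto simp del: upt_Suc)
  then have i: "0 < i" "i \<le> n" "l = inv (c ! (i - 1)) \<otimes> c ! i" by auto
  have "ple (c ! (i - 1)) (c ! i)"
    using maxchain_is_chain[OF mc] maxchain_length[OF mc] sorted_wrt_nth_less[of slt c "i - 1" i] i
    unfolding is_chain_def by simp
  note step = pleqD[OF this]
  then have "len l = 1" using maxchain_wlen_nth[OF mc, of i] maxchain_wlen_nth[OF mc, of "i - 1"] i by simp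
  then show ?thesis using wlen_eq_1_imp_S step(3) i(3) by simp
qed

lemma chain_labels_S: "set (chain_labels c) \<subseteq> S"
  using chain_labels_S_wlen by (simp add: subset_iff)

lemma wlen_chain_labels: "l \<in> set (chain_labels c) \<Longrightarrow> len l = 1"
  using chain_labels_S_wlen by simp

lemma wprod_take_chain_labels: "j \<le> n \<Longrightarrow> wprod G (take j (chain_labels c)) = c ! j"
proof (induction j)
  case 0
  then show ?case using maxchain_nth_0[OF mc] by simp
next
  case (Suc j)
  have j: "j < length (chain_labels c)" using Suc length_chain_labels by simp
  have cl: "set (chain_labels c) \<subseteq> carrier G" using chain_labels_S S_carrier by (rule subset_trans)
  have "set (take j (chain_labels c)) \<subseteq> carrier G" using set_take_subset cl by (rule subset_trans)
  moreover have "chain_labels c ! j \<in> carrier G" using cl nth_mem[OF j] by (rule subsetD)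
  ultimately have "wprod G (take (Suc j) (chain_labels c)) = wprod G (take j (chain_labels c)) \<otimes> chain_labels c ! j"
    using take_Suc_conv_app_nth[OF j] wprod_append by simp
  also have "\<dots> = c ! j \<otimes> (inv (c ! j) \<otimes> c ! Suc j)" using Suc chain_labels_nth[of j] by simp
  also have "\<dots> = c ! Suc j"
    using maxchain_nth_Mon[OF mc, of j] maxchain_nth_Mon[OF mc, of "Suc j"] Suc by (simp add: m_assoc[symmetric])
  finally show ?case .
qed

lemma chain_labels_geodesic:
  "set (chain_labels c) \<subseteq> S" "wprod G (chain_labels c) = g" "length (chain_labels c) = n"
  using chain_labels_S wprod_take_chain_labels[of n] length_chain_labels maxchain_nth_last[OF mc] by simp_all

lemma prefix_chain_chain_labels: "prefix_chain (chain_labels c) = c"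
proof (rule nth_equalityI)
  show "length (prefix_chain (chain_labels c)) = length c"
    using length_prefix_chain[OF chain_labels_geodesic] maxchain_length[OF mc] by simp
  fix j assume "j < length (prefix_chain (chain_labels c))"
  then have "j \<le> n" using length_prefix_chain[OF chain_labels_geodesic] by simp
  then show "prefix_chain (chain_labels c) ! j = c ! j"
    using prefix_chain_nth[OF chain_labels_geodesic] wprod_take_chain_labels by simp
qed

lemma lin_fact_chain_fact: "lin_fact G S g (chain_fact c)"
  unfolding lin_fact_def
proof (intro conjI allI impI)
  show "2 \<le> length (chain_fact c)" by (simp add: chain_fact_def)
  show "set (chain_fact c) \<subseteq> Mon G S" using chain_labels_S S_Mon by (auto simp: chain_fact_def subset_iff)
  fix i assume "0 < i \<and> i + 1 < length (chain_fact c)"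
  then have "chain_fact c ! i \<in> set (chain_labels c)"
    by (auto simp: chain_fact_def nth_append length_chain_labels nth_Cons')
  then show "chain_fact c ! i \<noteq> \<one>" using wlen_chain_labels by force
next
  have "map len (chain_labels c) = replicate n 1"
    using wlen_chain_labels length_chain_labels by (intro nth_equalityI) simp_all
  then show "sum_list (map len (chain_fact c)) = n" by (simp add: chain_fact_def sum_list_replicate)
  show "wprod G (chain_fact c) = g"
    using chain_labels_geodesic S_carrier by (simp add: chain_fact_def wprod_append)
qed

lemma geodesic_chain_spelling: "geodesic_spelling (chain_spelling c) (chain_fact c)"
  unfolding geodesic_spelling_def
proof (rule conjI)
  show "length (chain_spelling c) = length (chain_fact c)" by (simp add: chain_spelling_def chain_fact_def)
  show "\<forall>i<length (chain_fact c). set (chain_spelling c ! i) \<subseteq> S \<and>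
      length (chain_spelling c ! i) = len (chain_fact c ! i) \<and> wprod G (chain_spelling c ! i) = chain_fact c ! i"
  proof (intro allI impI)
    fix i assume i: "i < length (chain_fact c)"
    consider "i = 0" | "0 < i \<and> i \<le> n" | "i = n + 1"
      using i length_chain_labels by (simp add: chain_fact_def) linarith
    then show "set (chain_spelling c ! i) \<subseteq> S \<and> length (chain_spelling c ! i) = len (chain_fact c ! i)
        \<and> wprod G (chain_spelling c ! i) = chain_fact c ! i"
    proof cases
      case 2
      then have "chain_spelling c ! i = [chain_labels c ! (i - 1)]" "chain_fact c ! i = chain_labels c ! (i - 1)"
        and l: "chain_labels c ! (i - 1) \<in> set (chain_labels c)"
        using length_chain_labels by (auto simp: chain_spelling_def chain_fact_def nth_append nth_Cons')
      moreover have "chain_labels c ! (i - 1) \<in> S" using chain_labels_S l by (rule subsetD)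
      ultimately show ?thesis using wlen_chain_labels[OF l] S_carrier by auto
    qed (simp_all add: chain_spelling_def chain_fact_def nth_append length_chain_labels)
  qed
qed

lemma concat_chain_spelling: "concat (chain_spelling c) = chain_labels c"
  by (simp add: chain_spelling_def)

context
  fixes x assumes x: "x \<in> Og" "supp x \<subseteq> set c"
begin

lemma partial_weight_Suc: "i \<le> n \<Longrightarrow> partial_weight c x (Suc i) = partial_weight c x i + x (c ! i)"
  using maxchain_length[OF mc] by (simp add: partial_weight_def take_Suc_conv_app_nth)

lemma partial_weight_mono: "i \<le> j \<Longrightarrow> partial_weight c x i \<le> partial_weight c x j"
proof -
  assume "i \<le> j"
  then obtain d where "j = i + d" using le_Suc_ex by blast
  moreover have "0 \<le> sum_list (map x (take d (drop i c)))"
    using OptsD(1)[OF x(1)] by (intro sum_list_nonneg) auto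
  ultimately show ?thesis by (simp add: partial_weight_def take_add)
qed

lemma partial_weight_last: "partial_weight c x (n + 1) = 1"
proof -
  have "partial_weight c x (n + 1) = sum_list (map x c)"
    using maxchain_length[OF mc] by (simp add: partial_weight_def)
  also have "\<dots> = sum x (set c)"
    using sum_list_distinct_conv_sum_set[OF chain_distinct[OF maxchain_is_chain[OF mc]]] by simp
  also have "\<dots> = sum x (supp x)" by (rule sum.mono_neutral_right) (use x(2) in \<open>auto simp: supp_def\<close>)
  finally show ?thesis using OptsD(5)[OF x(1)] by simp
qed

lemma chain_positions_eq: "chain_positions c x = 0 # map (partial_weight c x) [1..<n+1] @ [1]"
proof -
  have "[0..<n+2] = 0 # [1..<n+1] @ [n+1]" by (simp add: upt_conv_Cons)
  then show ?thesis
    unfolding chain_positions_def using partial_weight_last by (simp add: partial_weight_def)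
qed

lemma cell_pos_chain_positions: "cell_pos (length (chain_fact c)) (chain_positions c x)"
  unfolding cell_pos_def
proof (intro conjI)
  show "length (chain_positions c x) = length (chain_fact c)"
    by (simp add: chain_positions_def chain_fact_def length_chain_labels)
  have "sorted_wrt (\<lambda>a b. partial_weight c x a \<le> partial_weight c x b) [0..<n+2]"
    by (rule sorted_wrt_mono_rel[OF _ sorted_wrt_upt]) (simp add: partial_weight_mono)
  then show "sorted (chain_positions c x)" unfolding chain_positions_def sorted_map by (simp del: upt_Suc)
  show "hd (chain_positions c x) = 0" "last (chain_positions c x) = 1" using chain_positions_eq by simp_all
qed

lemma cell_coord_chain_positions:
  assumes "i \<le> n + 1"
  shows "cell_coord (chain_fact c) (chain_positions c x) i = partial_weight c x i"
proof -
  have "zip (chain_fact c) (chain_positions c x)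
      = (\<one>, 0) # zip (chain_labels c) (map (partial_weight c x) [1..<n+1]) @ [(\<one>, 1)]"
    using chain_positions_eq length_chain_labels by (simp add: chain_fact_def)
  then have E: "pos_coords (zip (chain_fact c) (chain_positions c x)) = map (partial_weight c x) [1..<n+1]"
    using pos_coords_unit_factors[of "chain_labels c"] wlen_chain_labels length_chain_labels
    by (simp add: pos_coords_Cons pos_coords_def del: upt_Suc)
  consider "i = 0" | "0 < i \<and> i \<le> n" | "i = n + 1" using assms by linarith
  then show ?thesis
  proof cases
    case 2
    then have "i - 1 < length [1..<n+1]" by auto
    then have "map (partial_weight c x) [1..<n+1] ! (i - 1) = partial_weight c x i" using 2 by (simp del: upt_Suc)
    then show ?thesis using 2 E by (simp add: cell_coord_def)
  next
    case 3
    then show ?thesis using partial_weight_last by (simp add: cell_coord_def)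
  qed (simp add: cell_coord_def partial_weight_def)
qed

lemma cell_point_chain_positions: "cell_point c (chain_fact c) (chain_positions c x) = x"
proof
  fix z
  show "cell_point c (chain_fact c) (chain_positions c x) z = x z"
  proof (cases "z \<in> set c")
    case True
    then obtain j where j: "j \<le> n" "c ! j = z"
      using maxchain_length[OF mc] by (metis in_set_conv_nth less_Suc_eq_le Suc_eq_plus1)
    then show ?thesis
      using cell_point_nth[OF lin_fact_chain_fact cell_pos_chain_positions mc j(1)]
        cell_coord_chain_positions partial_weight_Suc[OF j(1)] by simp
  next
    case False
    then show ?thesis using x(2) by (auto simp: cell_point_def supp_def)
  qed
qed

lemma wfact_of_chain_positions: "wfact_of x = realize G (chain_fact c) (chain_positions c x)"
  using wfact_of_cell_point[OF lin_fact_chain_fact geodesic_chain_spelling cell_pos_chain_positions]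
  unfolding concat_chain_spelling prefix_chain_chain_labels cell_point_chain_positions .

end

end

lemma ostep_imp_wstep:
  assumes "x \<in> Og" "y \<in> Og" "ostep G S g x y r"
  shows "wstep G S g (wfact_of x) (wfact_of y) r"
proof -
  obtain c where c: "is_maxchain G S g c" "supp x \<subseteq> set c" "supp y \<subseteq> set c" "r = odist c x y"
    using assms(3) unfolding ostep_def by blast
  note x = assms(1) c(2) and y = assms(2) c(3)
  have "r = wdist G S (wfact_of x) (wfact_of y)"
    using odist_cell_point[OF lin_fact_chain_fact[OF c(1)] cell_pos_chain_positions[OF c(1) x]
        cell_pos_chain_positions[OF c(1) y] c(1)]
    unfolding cell_point_chain_positions[OF c(1) x] cell_point_chain_positions[OF c(1) y]
      wfact_of_chain_positions[OF c(1) x, symmetric] wfact_of_chain_positions[OF c(1) y, symmetric]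
    using c(4) by simp
  then show ?thesis
    unfolding wstep_def using lin_fact_chain_fact[OF c(1)] cell_pos_chain_positions[OF c(1) x]
      cell_pos_chain_positions[OF c(1) y] wfact_of_chain_positions[OF c(1) x] wfact_of_chain_positions[OF c(1) y]
    by blast
qed

section \<open>The isometry\<close>

lemma wfact_of_image: "wfact_of ` Og = WFactI G S g"
  using wfact_of_in_WFactI wfact_of_surj by blast

lemma qdist_wfact_of:
  assumes "p \<in> Og" "q \<in> Og"
  shows "qdist (WFactI G S g) (wstep G S g) Sequiv (wfact_of p) (wfact_of q) = qdist Og (ostep G S g) (Kequiv G S g) p q"
proof (rule qdist_map_eq[OF assms])
  show "wfact_of ` Og \<subseteq> WFactI G S g" using wfact_of_image by simp
  show "Sequiv (wfact_of a) (wfact_of b) \<longleftrightarrow> Kequiv G S g a b" if "a \<in> Og" "b \<in> Og" for a b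
    using Kequiv_iff_Sequiv[OF that] by simp
  show "wstep G S g (wfact_of a) (wfact_of b) r" if "a \<in> Og" "b \<in> Og" "ostep G S g a b r" for a b r
    using ostep_imp_wstep[OF that] .
  show "\<exists>a\<in>Og. \<exists>b\<in>Og. wfact_of a = u \<and> wfact_of b = v \<and> ostep G S g a b r" if "wstep G S g u v r" for u v r
    using wstep_imp_ostep[OF that] .
qed

end

theorem proposition4p10:
  fixes G :: "('a, 'b) monoid_scheme" and S :: "'a set" and g :: 'a
  assumes "group G" and "S \<subseteq> carrier G" and "generate G S = carrier G"
    and "conj_closed G S" and "g \<in> Mon G S"
  shows "\<exists>f. f ` Opts G S g = WFactI G S g \<and>
    (\<forall>p\<in>Opts G S g. \<forall>q\<in>Opts G S g.
       qdist (WFactI G S g) (wstep G S g) Sequiv (f p) (f q) =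
       qdist (Opts G S g) (ostep G S g) (Kequiv G S g) p q)"
proof -
  interpret word_interval G S g
    using assms(1,2,5) by (simp add: word_interval_def word_interval_axioms_def word_metric_def word_metric_axioms_def)
  show ?thesis using wfact_of_image qdist_wfact_of by blast
qed

end
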